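(* (1) Condition (i) below is satisfied by $x\mapsto\max\{0,x\}^k$ for every integer $k\ge2$, by the exponential linear unit $x\chi_{x\ge0}(x)+(e^x-1)\chi_{x<0}(x)$, by the softsign $x/(1+|x|)$, and by the inverse square root linear unit $x\chi_{x\ge0}(x)+\frac{x}{\sqrt{1+ax^2}}\chi_{x<0}(x)$ ($a>0$): (i) $\varrho\in C^1(\mathbb{R})\setminus C^\infty(\mathbb{R})$. (2) The inverse square root unit $x/\sqrt{1+ax^2}$ ($a>0$), the sigmoid $1/(1+e^{-x})$, $\tanh$ and $\arctan$ are bounded, analytic and not constant. (3) The softplus function $\ln(1+e^x)$ belongs to $C^1(\mathbb{R})$ and is approximately homogeneous of order $(1,0)$. Consequently, for each of these activation functions $\varrho$, every $B>0$ and every architecture $S=(d,N_1,\dots,N_{L-1},1)$ with $L\ge2$ (and $N_{L-1}\ge 2$ in cases (1) and (2)), the set $\mathcal{RNN}_\varrho^{[-B,B]^d}(S)$ is not closed in $C([-B,B]^d)$.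
   Context: A neural network with architecture $S=(N_0,\dots,N_L)$ ($N_0=d$) is a family $\Phi=((A_\ell,b_\ell))_{\ell=1}^L$, $A_\ell\in\mathbb{R}^{N_\ell\times N_{\ell-1}}$, $b_\ell\in\mathbb{R}^{N_\ell}$; $\mathcal{NN}(S)$ is the set of these. For $\varrho:\mathbb{R}\to\mathbb{R}$ and $\Omega\subset\mathbb{R}^d$, $\mathrm{R}_\varrho^\Omega(\Phi):\Omega\to\mathbb{R}^{N_L}$, $x\mapsto x_L$, where $x_0=x$, $x_\ell=\varrho(A_\ell x_{\ell-1}+b_\ell)$ for $1\le\ell\le L-1$ (componentwise), $x_L=A_Lx_{L-1}+b_L$; $\mathcal{RNN}_\varrho^\Omega(S)=\{\mathrm{R}_\varrho^\Omega(\Phi):\Phi\in\mathcal{NN}(S)\}$. A function $f:\mathbb{R}\to\mathbb{R}$ is approximately homogeneous of order $(r,q)\in\mathbb{N}_0^2$ if there is $s>0$ with $|f(x)-x^r|\le s$ for all $x\ge0$ and $|f(x)-x^q|\le s$ for all $x\le0$. *)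

theory Defs
  imports "HOL-Analysis.Analysis"
begin

definition C1 :: "(real \<Rightarrow> real) \<Rightarrow> bool" where
  "C1 f \<longleftrightarrow> (\<exists>f'. (\<forall>x. (f has_real_derivative f' x) (at x)) \<and> continuous_on UNIV f')"

definition Cinf :: "(real \<Rightarrow> real) \<Rightarrow> bool" where
  "Cinf f \<longleftrightarrow> (\<exists>D :: nat \<Rightarrow> real \<Rightarrow> real. D 0 = f \<and>
      (\<forall>n x. (D n has_real_derivative D (Suc n) x) (at x)))"

definition real_analytic :: "(real \<Rightarrow> real) \<Rightarrow> bool" where
  "real_analytic f \<longleftrightarrow> (\<forall>x0. \<exists>r>0. \<exists>c :: nat \<Rightarrow> real.
      \<forall>x. \<bar>x - x0\<bar> < r \<longrightarrow> (\<lambda>n. c n * (x - x0) ^ n) sums f x)"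

definition approx_homogeneous :: "nat \<Rightarrow> nat \<Rightarrow> (real \<Rightarrow> real) \<Rightarrow> bool" where
  "approx_homogeneous r q f \<longleftrightarrow> (\<exists>s>0. (\<forall>x\<ge>0. \<bar>f x - x ^ r\<bar> \<le> s) \<and> (\<forall>x\<le>0. \<bar>f x - x ^ q\<bar> \<le> s))"

definition relu_pow :: "nat \<Rightarrow> real \<Rightarrow> real" where
  "relu_pow k x = (max 0 x) ^ k"

definition elu :: "real \<Rightarrow> real" where
  "elu x = (if x \<ge> 0 then x else exp x - 1)"

definition softsign :: "real \<Rightarrow> real" where
  "softsign x = x / (1 + \<bar>x\<bar>)"

definition isrlu :: "real \<Rightarrow> real \<Rightarrow> real" where
  "isrlu a x = (if x \<ge> 0 then x else x / sqrt (1 + a * x^2))"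

definition isru :: "real \<Rightarrow> real \<Rightarrow> real" where
  "isru a x = x / sqrt (1 + a * x^2)"

definition sigmoid :: "real \<Rightarrow> real" where
  "sigmoid x = 1 / (1 + exp (- x))"

definition softplus :: "real \<Rightarrow> real" where
  "softplus x = ln (1 + exp x)"

text \<open>An architecture is a list S = [N_0, ..., N_L] (N_0 = d). A network is given by
  weights A l i j (layer l in 1..L, row i < N_l, column j < N_(l-1)) and biases b l i;
  entries outside these ranges are irrelevant. Inputs are x :: nat => real, only
  coordinates j < d are used.\<close>

fun hidden :: "(real \<Rightarrow> real) \<Rightarrow> nat list \<Rightarrow> (nat \<Rightarrow> nat \<Rightarrow> nat \<Rightarrow> real) \<Rightarrow> (nat \<Rightarrow> nat \<Rightarrow> real)
                 \<Rightarrow> nat \<Rightarrow> (nat \<Rightarrow> real) \<Rightarrow> (nat \<Rightarrow> real)" where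
  "hidden \<rho> S A b 0 x = x"
| "hidden \<rho> S A b (Suc l) x =
     (\<lambda>i. \<rho> ((\<Sum>j<S ! l. A (Suc l) i j * hidden \<rho> S A b l x j) + b (Suc l) i))"

definition realization :: "(real \<Rightarrow> real) \<Rightarrow> nat list \<Rightarrow> (nat \<Rightarrow> nat \<Rightarrow> nat \<Rightarrow> real)
                             \<Rightarrow> (nat \<Rightarrow> nat \<Rightarrow> real) \<Rightarrow> (nat \<Rightarrow> real) \<Rightarrow> real" where
  "realization \<rho> S A b x =
     (let L = length S - 1 in
      (\<Sum>j<S ! (L - 1). A L 0 j * hidden \<rho> S A b (L - 1) x j) + b L 0)"

definition cube :: "nat \<Rightarrow> real \<Rightarrow> (nat \<Rightarrow> real) set" where
  "cube d B = {x. (\<forall>i<d. \<bar>x i\<bar> \<le> B) \<and> (\<forall>i\<ge>d. x i = 0)}"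

definition in_RNN :: "(real \<Rightarrow> real) \<Rightarrow> nat list \<Rightarrow> (nat \<Rightarrow> real) set \<Rightarrow> ((nat \<Rightarrow> real) \<Rightarrow> real) \<Rightarrow> bool" where
  "in_RNN \<rho> S \<Omega> f \<longleftrightarrow> (\<exists>A b. \<forall>x\<in>\<Omega>. f x = realization \<rho> S A b x)"

definition RNN_not_closed :: "(real \<Rightarrow> real) \<Rightarrow> nat list \<Rightarrow> (nat \<Rightarrow> real) set \<Rightarrow> bool" where
  "RNN_not_closed \<rho> S \<Omega> \<longleftrightarrow>
     (\<exists>g :: nat \<Rightarrow> (nat \<Rightarrow> real) \<Rightarrow> real. \<exists>f.
        (\<forall>n. in_RNN \<rho> S \<Omega> (g n)) \<and> continuous_on \<Omega> f \<and>
        uniform_limit \<Omega> g f sequentially \<and> \<not> in_RNN \<rho> S \<Omega> f)"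

definition scalar_arch :: "nat list \<Rightarrow> bool" where
  "scalar_arch S \<longleftrightarrow> length S \<ge> 3 \<and> (\<forall>i<length S. S ! i \<ge> 1) \<and> last S = 1"

end

theory Submission
  imports Defs "HOL-Complex_Analysis.Complex_Analysis"
begin

text \<open>
  A network whose hidden layers form a chain of
  single neurons, followed by a last hidden layer with at most two neurons, realizes along the first
  coordinate axis the function \<open>t \<mapsto> h\<^sub>n (T\<^sub>n ^^ K) t\<close>. Here
  \<open>T\<^sub>n y = (n + 1) / \<rho>' x\<^sub>0 * (\<rho> (x\<^sub>0 + y / (n + 1)) - \<rho> x\<^sub>0)\<close> tends to the identity
  locally uniformly, and the last hidden layer computes \<open>h\<^sub>n\<close>, chosen to converge locally uniformly
  to a continuous \<open>F\<close>: a difference quotient of \<open>\<rho>\<close> gives \<open>F = \<rho>' (x\<^sub>1 + _)\<close> (this needs two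
  neurons), \<open>T\<^sub>n\<close> itself gives the identity, and \<open>softplus (- (n + 1) * y) / (n + 1)\<close> gives
  \<open>max 0 (- y)\<close>.

  The limit is never a realization. Realizations of a \<open>C\<^sup>m\<close> activation are \<open>C\<^sup>m\<close> along the
  axis. If \<open>\<rho>\<close> is \<open>C\<^sup>1\<close> but not \<open>C\<^sup>\<infinity>\<close> then, since being \<open>C\<^sup>m\<close> is a local property, there are \<open>m\<close> and
  \<open>x\<^sub>1\<close> such that \<open>\<rho>\<close> is \<open>C\<^sup>m\<close> but \<open>\<rho>'\<close> is not \<open>C\<^sup>m\<close> near \<open>x\<^sub>1\<close>; and \<open>max 0 (- y)\<close> is not
  \<open>C\<^sup>1\<close>. For a bounded activation with a holomorphic extension to a neighbourhood of the real
  line every realization extends holomorphically as well, so agreeing with the identity on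
  \<open>[-B, B]\<close> would make it the identity on the whole real line, contradicting boundedness.

  That the listed activations are not \<open>C\<^sup>\<infinity>\<close> rests on two obstructions: a \<open>C\<^sup>m\<close> function that is
  constant to the right of \<open>0\<close> is \<open>o(|t|\<^sup>m)\<close> to the left of \<open>0\<close>, and a function differentiable
  at \<open>0\<close> admits no corner \<open>G 0 - G t \<ge> c * |t|\<close>.
\<close>

section \<open>Functions of class C^m\<close>

definition Ck :: "nat \<Rightarrow> (real \<Rightarrow> real) \<Rightarrow> bool" where
  "Ck m f \<longleftrightarrow> (\<exists>D. D 0 = f \<and> (\<forall>j<m. \<forall>x. (D j has_real_derivative D (Suc j) x) (at x))
      \<and> continuous_on UNIV (D m))"

lemma Ck_0: "Ck 0 f \<longleftrightarrow> continuous_on UNIV f"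
  unfolding Ck_def by (auto intro!: exI[of _ "\<lambda>_. f"])

lemma Ck_Suc: "Ck (Suc m) f \<longleftrightarrow> (\<exists>f'. (\<forall>x. (f has_real_derivative f' x) (at x)) \<and> Ck m f')"
proof
  assume "Ck (Suc m) f"
  then obtain D where "D 0 = f" "\<forall>j<Suc m. \<forall>x. (D j has_real_derivative D (Suc j) x) (at x)"
    "continuous_on UNIV (D (Suc m))" unfolding Ck_def by blast
  then show "\<exists>f'. (\<forall>x. (f has_real_derivative f' x) (at x)) \<and> Ck m f'"
    unfolding Ck_def by (auto intro!: exI[of _ "D 1"] exI[of _ "\<lambda>j. D (Suc j)"])
next
  assume "\<exists>f'. (\<forall>x. (f has_real_derivative f' x) (at x)) \<and> Ck m f'"
  then obtain f' D where "\<forall>x. (f has_real_derivative f' x) (at x)" "D 0 = f'"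
    "\<forall>j<m. \<forall>x. (D j has_real_derivative D (Suc j) x) (at x)" "continuous_on UNIV (D m)"
    unfolding Ck_def by blast
  then show "Ck (Suc m) f"
    unfolding Ck_def
    by (intro exI[of _ "\<lambda>j. if j = 0 then f else D (j - 1)"]) (auto simp: less_Suc_eq_0_disj)
qed

lemma Ck_Suc_deriv:
  "Ck (Suc m) f \<longleftrightarrow> (\<forall>x. (f has_real_derivative deriv f x) (at x)) \<and> Ck m (deriv f)"
proof -
  have "deriv f = f'" if "\<forall>x. (f has_real_derivative f' x) (at x)" for f'
    using that DERIV_imp_deriv by blast
  then show ?thesis unfolding Ck_Suc by metis
qed

lemma Ck_deriv:
  assumes "Ck (Suc m) f" and "\<And>x. (f has_real_derivative f' x) (at x)"
  shows "Ck m f'"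
proof -
  have "deriv f = f'" using assms(2) DERIV_imp_deriv by blast
  then show ?thesis using assms(1) by (simp add: Ck_Suc_deriv)
qed

lemma Ck_imp_continuous_on: "Ck m f \<Longrightarrow> continuous_on UNIV f"
  by (cases m) (auto simp: Ck_0 Ck_Suc intro: DERIV_isCont continuous_at_imp_continuous_on)

lemma Ck_Suc_imp_Ck: "Ck (Suc m) f \<Longrightarrow> Ck m f"
proof (induction m arbitrary: f)
  case 0
  then show ?case using Ck_imp_continuous_on Ck_0 by blast
next
  case (Suc m)
  then show ?case by (meson Ck_Suc)
qed

lemma Ck_const: "Ck m (\<lambda>x. c)"
  by (induction m arbitrary: c) (auto simp: Ck_0 Ck_Suc intro!: exI[of _ "\<lambda>x. 0"])

lemma Ck_ident: "Ck m (\<lambda>x. x)"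
  by (cases m) (auto simp: Ck_0 Ck_Suc Ck_const intro!: exI[of _ "\<lambda>x. 1"])

lemma Ck_add: "Ck m f \<Longrightarrow> Ck m g \<Longrightarrow> Ck m (\<lambda>x. f x + g x)"
proof (induction m arbitrary: f g)
  case 0
  then show ?case by (auto simp: Ck_0 intro: continuous_intros)
next
  case (Suc m)
  then obtain f' g' where "\<forall>x. (f has_real_derivative f' x) (at x)" "Ck m f'"
    "\<forall>x. (g has_real_derivative g' x) (at x)" "Ck m g'" by (auto simp: Ck_Suc)
  then show ?case using Suc.IH
    by (auto simp: Ck_Suc intro!: exI[of _ "\<lambda>x. f' x + g' x"] derivative_eq_intros)
qed

lemma Ck_mult: "Ck m f \<Longrightarrow> Ck m g \<Longrightarrow> Ck m (\<lambda>x. f x * g x)"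
proof (induction m arbitrary: f g)
  case 0
  then show ?case by (auto simp: Ck_0 intro: continuous_intros)
next
  case (Suc m)
  then obtain f' g' where d: "\<forall>x. (f has_real_derivative f' x) (at x)" "Ck m f'"
    "\<forall>x. (g has_real_derivative g' x) (at x)" "Ck m g'" by (auto simp: Ck_Suc)
  have "Ck m (\<lambda>x. f' x * g x + f x * g' x)"
    using Suc d Ck_Suc_imp_Ck by (intro Ck_add) auto
  then show ?case using d
    by (auto simp: Ck_Suc intro!: exI[of _ "\<lambda>x. f' x * g x + f x * g' x"] derivative_eq_intros)
qed

lemma Ck_compose: "Ck m f \<Longrightarrow> Ck m g \<Longrightarrow> Ck m (\<lambda>x. f (g x))"
proof (induction m arbitrary: f g)
  case 0
  then show ?case by (auto simp: Ck_0 intro!: continuous_on_compose2[of UNIV f UNIV g])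
next
  case (Suc m)
  then obtain f' g' where d: "\<forall>x. (f has_real_derivative f' x) (at x)" "Ck m f'"
    "\<forall>x. (g has_real_derivative g' x) (at x)" "Ck m g'" by (auto simp: Ck_Suc)
  have "Ck m (\<lambda>x. f' (g x) * g' x)"
    using Suc d Ck_Suc_imp_Ck by (intro Ck_mult) auto
  then show ?case using d DERIV_chain2[OF d(1)[rule_format] d(3)[rule_format]]
    by (auto simp: Ck_Suc intro!: exI[of _ "\<lambda>x. f' (g x) * g' x"])
qed

lemma Ck_cmult: "Ck m f \<Longrightarrow> Ck m (\<lambda>x. c * f x)"
  using Ck_mult[OF Ck_const] by blast

lemma Ck_sum: "(\<And>j. j \<in> J \<Longrightarrow> Ck m (f j)) \<Longrightarrow> Ck m (\<lambda>x. \<Sum>j\<in>J. f j x)"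
  by (induction J rule: infinite_finite_induct) (auto simp: Ck_const Ck_add)

lemma C1_iff_Ck_1: "C1 f \<longleftrightarrow> Ck 1 f"
  by (simp add: C1_def Ck_Suc Ck_0)

lemma Cinf_iff_all_Ck: "Cinf f \<longleftrightarrow> (\<forall>m. Ck m f)"
proof
  assume "Cinf f"
  then obtain D where D: "D 0 = f" "\<And>n x. (D n has_real_derivative D (Suc n) x) (at x)"
    unfolding Cinf_def by blast
  have "continuous_on UNIV (D m)" for m
    using D(2) by (meson DERIV_isCont continuous_at_imp_continuous_on)
  then show "\<forall>m. Ck m f" using D unfolding Ck_def by blast
next
  assume all: "\<forall>m. Ck m f"
  have "\<forall>m. Ck m ((deriv ^^ n) f)" for n
    by (induction n) (use all Ck_Suc_deriv in auto)
  then have "((deriv ^^ n) f has_real_derivative (deriv ^^ Suc n) f x) (at x)" for n x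
    using Ck_Suc_deriv[of 0 "(deriv ^^ n) f" for n] by auto
  then show "Cinf f" unfolding Cinf_def by (intro exI[of _ "\<lambda>n. (deriv ^^ n) f"]) simp
qed

definition locally_Ck :: "nat \<Rightarrow> (real \<Rightarrow> real) \<Rightarrow> real \<Rightarrow> bool" where
  "locally_Ck m f x \<longleftrightarrow> (\<exists>G. Ck m G \<and> (\<forall>\<^sub>F y in nhds x. G y = f y))"

lemma Ck_imp_locally_Ck: "Ck m f \<Longrightarrow> locally_Ck m f x"
  unfolding locally_Ck_def by auto

lemma locally_Ck_imp_Ck: "(\<And>x. locally_Ck m f x) \<Longrightarrow> Ck m f"
proof (induction m arbitrary: f)
  case 0
  have "isCont f x" for x
  proof -
    obtain G where "Ck 0 G" and ev: "\<forall>\<^sub>F y in nhds x. G y = f y"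
      using "0" unfolding locally_Ck_def by blast
    then have "isCont G x" by (simp add: Ck_0 continuous_on_eq_continuous_at)
    then show ?thesis using isCont_cong[OF ev] by simp
  qed
  then show ?case by (simp add: Ck_0 continuous_at_imp_continuous_on)
next
  case (Suc m)
  have "(f has_real_derivative deriv f x) (at x) \<and> locally_Ck m (deriv f) x" for x
  proof -
    obtain G where G: "Ck (Suc m) G" and ev: "\<forall>\<^sub>F y in nhds x. G y = f y"
      using Suc.prems unfolding locally_Ck_def by blast
    have G': "\<And>y. (G has_real_derivative deriv G y) (at y)" "Ck m (deriv G)"
      using G by (auto simp: Ck_Suc_deriv)
    have "\<forall>\<^sub>F y in nhds x. \<forall>\<^sub>F z in nhds y. G z = f z"
      using ev by (simp add: eventually_eventually)
    then have "\<forall>\<^sub>F y in nhds x. (f has_real_derivative deriv G y) (at y)"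
    proof eventually_elim
      case (elim y)
      then show ?case using G'(1)[of y] DERIV_cong_ev[OF refl elim refl] by simp
    qed
    then have ev': "\<forall>\<^sub>F y in nhds x. deriv G y = deriv f y \<and> (f has_real_derivative deriv G y) (at y)"
      by eventually_elim (auto dest: DERIV_imp_deriv)
    have "locally_Ck m (deriv f) x"
      unfolding locally_Ck_def using G'(2) ev' by (auto intro!: exI[of _ "deriv G"] elim: eventually_mono)
    moreover have "(f has_real_derivative deriv f x) (at x)"
      using eventually_nhds_x_imp_x[OF ev'] by metis
    ultimately show ?thesis by blast
  qed
  then show ?case using Suc.IH by (auto simp: Ck_Suc_deriv)
qed

lemma locally_Ck_reflect:
  assumes "locally_Ck m f x"
  shows "locally_Ck m (\<lambda>y. f (- y)) (- x)"
proof -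
  obtain G where G: "Ck m G" and ev: "\<forall>\<^sub>F y in nhds x. G y = f y"
    using assms unfolding locally_Ck_def by blast
  have "Ck m (\<lambda>y. G (-1 * y))" by (rule Ck_compose[OF G Ck_cmult[OF Ck_ident]])
  moreover have "filterlim uminus (nhds x) (nhds (- x))"
    using tendsto_minus[OF filterlim_ident, of "- x"] by simp
  then have "\<forall>\<^sub>F y in nhds (- x). G (- y) = f (- y)"
    by (rule eventually_compose_filterlim[OF ev])
  ultimately show ?thesis unfolding locally_Ck_def by auto
qed

lemma derivative_chain_flat_right:
  fixes D :: "nat \<Rightarrow> real \<Rightarrow> real"
  assumes Dd: "\<And>j x. j < m \<Longrightarrow> (D j has_real_derivative D (Suc j) x) (at x)"
    and Dc: "continuous_on UNIV (D m)" and e: "e > 0"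
    and flat: "\<And>t. 0 \<le> t \<Longrightarrow> t < e \<Longrightarrow> D 0 t = D 0 0"
  shows "j \<le> m \<Longrightarrow> 0 \<le> t \<Longrightarrow> t < e \<Longrightarrow> D j t = (if j = 0 then D 0 0 else 0)"
proof (induction j arbitrary: t)
  case 0
  then show ?case using flat[of t] by simp
next
  case (Suc j)
  txt \<open>Inside \<open>(0, e)\<close> by local constancy, at \<open>0\<close> by continuity from the right.\<close>
  have inner: "D (Suc j) t = 0" if t: "0 < t" "t < e" for t
  proof (rule DERIV_local_const[OF Dd[of j t]])
    show "j < m" using Suc by simp
    show "0 < min t (e - t)" using t by simp
    show "\<forall>y. \<bar>t - y\<bar> < min t (e - t) \<longrightarrow> D j t = D j y"
    proof (intro allI impI)
      fix y assume "\<bar>t - y\<bar> < min t (e - t)"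
      then have "0 \<le> y" "y < e" by auto
      then show "D j t = D j y" using Suc.IH[of t] Suc.IH[of y] Suc.prems t by simp
    qed
  qed
  have "isCont (D (Suc j)) 0"
  proof (cases "Suc j < m")
    case True
    then show ?thesis using Dd DERIV_isCont by blast
  next
    case False
    then have "Suc j = m" using Suc.prems(1) by simp
    then show ?thesis using Dc by (simp add: continuous_on_eq_continuous_at)
  qed
  then have "((D (Suc j)) \<longlongrightarrow> D (Suc j) 0) (at_right 0)"
    by (simp add: isCont_def filterlim_at_split)
  moreover have "\<forall>\<^sub>F t in at_right 0. D (Suc j) t = 0"
    unfolding eventually_at_right_field using e inner by blast
  then have "((D (Suc j)) \<longlongrightarrow> 0) (at_right 0)"
    by (rule tendsto_eventually)
  ultimately have "D (Suc j) 0 = 0"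
    by (rule tendsto_unique[rotated]) simp
  then show ?case using inner Suc.prems by (cases "t = 0") auto
qed

lemma Ck_flat_right_imp_small_left:
  fixes G :: "real \<Rightarrow> real"
  assumes Ck: "Ck m G" and m: "1 \<le> m" and e: "e > 0" and c: "c > 0"
    and flat: "\<And>t. 0 \<le> t \<Longrightarrow> t < e \<Longrightarrow> G t = G 0"
  shows "\<forall>\<^sub>F t in at_left 0. \<bar>G t - G 0\<bar> < c * \<bar>t\<bar> ^ m"
proof -
  obtain D where D0: "D 0 = G"
    and Dd: "\<And>j x. j < m \<Longrightarrow> (D j has_real_derivative D (Suc j) x) (at x)"
    and Dc: "continuous_on UNIV (D m)" using Ck unfolding Ck_def by blast
  have "\<And>t. 0 \<le> t \<Longrightarrow> t < e \<Longrightarrow> D 0 t = D 0 0" using flat D0 by blast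
  note flat_D = derivative_chain_flat_right[OF Dd Dc e this]
  have Dcont: "isCont (D m) 0"
    using Dc by (simp add: continuous_on_eq_continuous_at)
  have D0_m: "D m 0 = 0" using flat_D[of m 0] e m by simp
  have "\<forall>r>0. \<exists>s>0. \<forall>x. x \<noteq> 0 \<and> norm (x - 0) < s \<longrightarrow> norm (D m x - D m 0) < r"
    using Dcont by (simp add: isCont_def LIM_eq)
  moreover have "c * fact m > 0" using c by simp
  ultimately obtain s where s: "s > 0"
    and near: "\<forall>x. x \<noteq> 0 \<and> norm (x - 0) < s \<longrightarrow> norm (D m x - D m 0) < c * fact m"
    by blast
  have small: "\<bar>D m x\<bar> / fact m < c" if "x \<noteq> 0" "\<bar>x\<bar> < s" for x
    using near that D0_m by (simp add: divide_less_eq mult.commute)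
  have "\<bar>G h - G 0\<bar> < c * \<bar>h\<bar> ^ m" if h: "- min e s < h" "h < 0" for h
  proof -
    have "\<forall>i t. i < m \<and> h \<le> t \<and> t \<le> 0 \<longrightarrow> (D i has_real_derivative D (Suc i) t) (at t)"
      using Dd by blast
    from Maclaurin_minus[OF h(2) _ D0 this] m obtain \<xi> where \<xi>: "h < \<xi>" "\<xi> < 0"
      and taylor: "G h = (\<Sum>i<m. D i 0 / fact i * h ^ i) + D m \<xi> / fact m * h ^ m"
      by auto
    have "(\<Sum>i<m. D i 0 / fact i * h ^ i) = (\<Sum>i<m. if i = 0 then G 0 else 0)"
    proof (rule sum.cong)
      fix i assume "i \<in> {..<m}"
      then show "D i 0 / fact i * h ^ i = (if i = 0 then G 0 else 0)"
        using flat_D[of i 0] e D0 by auto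
    qed simp
    also have "\<dots> = G 0" using m by (simp add: sum.delta)
    finally have "\<bar>G h - G 0\<bar> = \<bar>D m \<xi>\<bar> / fact m * \<bar>h\<bar> ^ m"
      using taylor by (simp add: abs_mult power_abs)
    also have "\<dots> < c * \<bar>h\<bar> ^ m"
    proof (rule mult_strict_right_mono)
      show "\<bar>D m \<xi>\<bar> / fact m < c" using small \<xi> h by simp
      show "0 < \<bar>h\<bar> ^ m" using h by simp
    qed
    finally show ?thesis .
  qed
  then show ?thesis
    unfolding eventually_at_left_field using e s by (intro exI[of _ "- min e s"]) auto
qed

lemma not_locally_Ck_flat_right:
  assumes m: "1 \<le> m" and e: "e > 0" and c: "c > 0"
    and flat: "\<And>u. 0 \<le> u \<Longrightarrow> u < e \<Longrightarrow> g u = g 0"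
    and growth: "\<And>u. - e < u \<Longrightarrow> u < 0 \<Longrightarrow> c * \<bar>u\<bar> ^ m \<le> \<bar>g u - g 0\<bar>"
  shows "\<not> locally_Ck m g 0"
proof
  assume "locally_Ck m g 0"
  then obtain G d where G: "Ck m G" and d: "d > 0" and Gg: "\<And>y. \<bar>y\<bar> < d \<Longrightarrow> G y = g y"
    unfolding locally_Ck_def eventually_nhds_metric dist_real_def by auto
  have flatG: "G t = G 0" if "0 \<le> t" "t < min e d" for t
    using that flat[of t] Gg[of t] Gg[of 0] d by simp
  have "min e d > 0" using e d by simp
  have small: "\<forall>\<^sub>F t in at_left 0. \<bar>G t - G 0\<bar> < c * \<bar>t\<bar> ^ m"
  proof (rule Ck_flat_right_imp_small_left[OF G m \<open>min e d > 0\<close> c])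
    show "G t = G 0" if "0 \<le> t" "t < min e d" for t
      using that by (rule flatG)
  qed
  have "c * \<bar>t\<bar> ^ m \<le> \<bar>G t - G 0\<bar>" if "- min e d < t" "t < 0" for t
    using that growth[of t] Gg[of t] Gg[of 0] d by simp
  then have "\<forall>\<^sub>F t in at_left 0. c * \<bar>t\<bar> ^ m \<le> \<bar>G t - G 0\<bar>"
    unfolding eventually_at_left_field using e d by (intro exI[of _ "- min e d"]) auto
  with small have "\<forall>\<^sub>F t in at_left (0::real). False"
    by eventually_elim simp
  then show False by simp
qed

lemma DERIV_not_corner:
  fixes G :: "real \<Rightarrow> real"
  assumes "(G has_real_derivative D) (at 0)" and c: "c > 0"
    and e: "e > 0" and corner: "\<And>t. \<bar>t\<bar> < e \<Longrightarrow> c * \<bar>t\<bar> \<le> G 0 - G t"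
  shows False
proof -
  have lim: "((\<lambda>t. (G t - G 0) / (t - 0)) \<longlongrightarrow> D) (at 0)"
    using assms(1) by (simp add: has_field_derivative_iff)
  have "D \<le> - c"
  proof (rule tendsto_upperbound)
    show "((\<lambda>t. (G t - G 0) / (t - 0)) \<longlongrightarrow> D) (at_right 0)"
      using lim by (simp add: filterlim_at_split)
    show "\<forall>\<^sub>F t in at_right 0. (G t - G 0) / (t - 0) \<le> - c"
      unfolding eventually_at_right_field
    proof (intro exI[of _ e] conjI allI impI)
      fix t :: real assume t: "0 < t" "t < e"
      then have "c * t \<le> G 0 - G t" using corner[of t] by simp
      then show "(G t - G 0) / (t - 0) \<le> - c" using t by (simp add: divide_le_eq)
    qed (use e in auto)
  qed simp
  moreover have "c \<le> D"
  proof (rule tendsto_lowerbound)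
    show "((\<lambda>t. (G t - G 0) / (t - 0)) \<longlongrightarrow> D) (at_left 0)"
      using lim by (simp add: filterlim_at_split)
    show "\<forall>\<^sub>F t in at_left 0. c \<le> (G t - G 0) / (t - 0)"
      unfolding eventually_at_left_field
    proof (intro exI[of _ "- e"] conjI allI impI)
      fix t :: real assume t: "- e < t" "t < 0"
      then have "c * (- t) \<le> G 0 - G t" using corner[of t] by simp
      then show "c \<le> (G t - G 0) / (t - 0)" using t by (simp add: le_divide_eq)
    qed (use e in auto)
  qed simp
  ultimately show False using c by simp
qed

lemma not_locally_Ck_corner:
  assumes e: "e > 0" and c: "c > 0" and corner: "\<And>u. \<bar>u\<bar> < e \<Longrightarrow> c * \<bar>u\<bar> \<le> g 0 - g u"
  shows "\<not> locally_Ck 1 g 0"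
proof
  assume "locally_Ck 1 g 0"
  then obtain G d where G: "Ck 1 G" and d: "d > 0" and Gg: "\<And>y. \<bar>y\<bar> < d \<Longrightarrow> G y = g y"
    unfolding locally_Ck_def eventually_nhds_metric dist_real_def by auto
  have D: "(G has_real_derivative deriv G 0) (at 0)"
    using G Ck_Suc_deriv[of 0 G] by simp
  have corner': "c * \<bar>t\<bar> \<le> G 0 - G t" if "\<bar>t\<bar> < min e d" for t
    using that corner[of t] Gg[of t] Gg[of 0] d by simp
  have "min e d > 0" using e d by simp
  from DERIV_not_corner[OF D c this corner'] show False .
qed

lemma not_Cinf_if_deriv_not_locally_Ck:
  assumes "\<And>x. (f has_real_derivative f' x) (at x)" and "\<not> locally_Ck m f' x"
  shows "\<not> Cinf f"
  using assms Ck_deriv Ck_imp_locally_Ck Cinf_iff_all_Ck by blast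

lemma C1_not_Cinf_obtain_order:
  assumes "C1 f" and "\<not> Cinf f"
  obtains m x where "1 \<le> m" "Ck m f" "\<not> locally_Ck m (deriv f) x"
proof -
  have "\<exists>m. \<not> Ck (Suc m) f"
    using assms(2) Ck_Suc_imp_Ck by (auto simp: Cinf_iff_all_Ck)
  define m where "m = (LEAST m. \<not> Ck (Suc m) f)"
  have not_Suc: "\<not> Ck (Suc m) f"
    unfolding m_def by (rule LeastI_ex) fact
  have Ck1: "Ck 1 f" using assms(1) by (simp add: C1_iff_Ck_1)
  have "Ck m f"
  proof (cases m)
    case 0
    then show ?thesis using Ck1 Ck_Suc_imp_Ck by simp
  next
    case (Suc k)
    then show ?thesis using not_less_Least[of k "\<lambda>m. \<not> Ck (Suc m) f"] by (simp add: m_def)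
  qed
  moreover have "1 \<le> m" using Ck1 not_Suc by (cases m) auto
  moreover have "\<not> Ck m (deriv f)"
    using Ck1 not_Suc by (auto simp: Ck_Suc_deriv)
  then obtain x where "\<not> locally_Ck m (deriv f) x"
    using locally_Ck_imp_Ck by blast
  ultimately show ?thesis using that by blast
qed

section \<open>Locally uniform approximation\<close>

lemma uniform_limit_compose_locally_uniform:
  fixes T :: "nat \<Rightarrow> real \<Rightarrow> real" and Z :: "nat \<Rightarrow> 'a \<Rightarrow> real"
  assumes T: "\<And>R. uniform_limit {-R..R} T h sequentially" and h: "continuous_on UNIV h"
    and Z: "uniform_limit X Z z sequentially" and z: "bounded (z ` X)"
  shows "uniform_limit X (\<lambda>n x. T n (Z n x)) (\<lambda>x. h (z x)) sequentially"
proof -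
  obtain R where R: "\<And>x. x \<in> X \<Longrightarrow> \<bar>z x\<bar> \<le> R"
    using z by (auto simp: bounded_iff)
  have near: "\<forall>\<^sub>F n in sequentially. \<forall>x\<in>X. Z n x \<in> {-(R + 1)..R + 1}"
    using uniform_limitD[OF Z zero_less_one]
    by eventually_elim (force simp: dist_real_def abs_le_iff dest: R)
  have "uniform_limit X (\<lambda>n x. h (Z n x)) (\<lambda>x. h (z x)) sequentially"
    by (rule uniform_limit_compose_uniformly_continuous_on[OF Z _ near])
      (auto intro: compact_uniformly_continuous continuous_on_subset[OF h])
  moreover have "uniform_limit X (\<lambda>n x. T n (Z n x) - h (Z n x)) (\<lambda>x. 0) sequentially"
  proof (rule uniform_limitI)
    fix \<epsilon> :: real assume "\<epsilon> > 0"
    with T[of "R + 1"] have "\<forall>\<^sub>F n in sequentially. \<forall>y\<in>{-(R + 1)..R + 1}. dist (T n y) (h y) < \<epsilon>"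
      by (simp add: uniform_limit_iff)
    with near show "\<forall>\<^sub>F n in sequentially. \<forall>x\<in>X. dist (T n (Z n x) - h (Z n x)) 0 < \<epsilon>"
      by eventually_elim (auto simp: dist_real_def)
  qed
  ultimately show ?thesis
    using uniform_limit_add by fastforce
qed

lemma uniform_limit_funpow:
  fixes T :: "nat \<Rightarrow> real \<Rightarrow> real" and Z :: "nat \<Rightarrow> 'a \<Rightarrow> real"
  assumes T: "\<And>R. uniform_limit {-R..R} T (\<lambda>y. y) sequentially"
    and Z: "uniform_limit X Z z sequentially" and z: "bounded (z ` X)"
  shows "uniform_limit X (\<lambda>n x. (T n ^^ k) (Z n x)) z sequentially"
proof (induction k)
  case 0
  then show ?case using Z by simp
next
  case (Suc k)
  then show ?case
    using uniform_limit_compose_locally_uniform[OF T continuous_on_id Suc z] by simp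
qed

lemma difference_quotient_uniform_limit:
  assumes der: "\<And>x. (f has_real_derivative f' x) (at x)" and cont: "continuous_on UNIV f'"
  shows "uniform_limit {-R..R} (\<lambda>n y. (real n + 1) * (f (y + 1 / (real n + 1)) - f y)) f' sequentially"
proof (rule uniform_limitI)
  fix \<epsilon> :: real assume "\<epsilon> > 0"
  have "uniformly_continuous_on {-R..R + 1} f'"
    by (rule compact_uniformly_continuous) (auto intro: continuous_on_subset[OF cont])
  then obtain \<delta> where "\<delta> > 0" and \<delta>: "\<And>x x'. x \<in> {-R..R + 1} \<Longrightarrow> x' \<in> {-R..R + 1} \<Longrightarrow>
      dist x' x < \<delta> \<Longrightarrow> dist (f' x') (f' x) < \<epsilon>"
    using \<open>\<epsilon> > 0\<close> unfolding uniformly_continuous_on_def by metis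
  obtain N where N: "inverse (real (Suc N)) < \<delta>"
    using reals_Archimedean[OF \<open>\<delta> > 0\<close>] by blast
  show "\<forall>\<^sub>F n in sequentially. \<forall>y\<in>{-R..R}.
      dist ((real n + 1) * (f (y + 1 / (real n + 1)) - f y)) (f' y) < \<epsilon>"
    unfolding eventually_sequentially
  proof (intro exI[of _ N] allI impI ballI)
    fix n y assume n: "N \<le> n" and y: "y \<in> {-R..R}"
    define h where "h = 1 / (real n + 1)"
    have "h \<le> inverse (real (Suc N))"
      using n by (simp add: h_def divide_simps)
    then have h: "0 < h" "h < \<delta>" "h \<le> 1"
      using N by (auto simp: h_def)
    obtain \<xi> where \<xi>: "y < \<xi>" "\<xi> < y + h" and mvt: "f (y + h) - f y = (y + h - y) * f' \<xi>"
      using MVT2[of y "y + h" f f'] h der by auto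
    have "(real n + 1) * (f (y + h) - f y) = f' \<xi>"
      using mvt by (simp add: h_def)
    moreover have "dist (f' \<xi>) (f' y) < \<epsilon>"
      by (rule \<delta>) (use y \<xi> h in \<open>auto simp: dist_real_def\<close>)
    ultimately show "dist ((real n + 1) * (f (y + 1 / (real n + 1)) - f y)) (f' y) < \<epsilon>"
      by (simp add: h_def)
  qed
qed

lemma rescaled_increment_uniform_limit:
  assumes der: "(f has_real_derivative D) (at x0)" and D: "D \<noteq> 0"
  shows "uniform_limit {-R..R} (\<lambda>n y. (real n + 1) / D * (f (x0 + y / (real n + 1)) - f x0))
           (\<lambda>y. y) sequentially"
proof (rule uniform_limitI)
  fix \<epsilon> :: real assume \<epsilon>: "\<epsilon> > 0"
  define \<eta> where "\<eta> = \<epsilon> * \<bar>D\<bar> / (\<bar>R\<bar> + 1)"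
  have "\<eta> > 0" using \<epsilon> D by (simp add: \<eta>_def)
  moreover have "((\<lambda>h. (f (x0 + h) - f x0) / h) \<longlongrightarrow> D) (at 0)"
    using der by (simp add: DERIV_def)
  ultimately obtain s where s: "s > 0"
    and quot: "\<And>h. h \<noteq> 0 \<Longrightarrow> \<bar>h\<bar> < s \<Longrightarrow> \<bar>(f (x0 + h) - f x0) / h - D\<bar> < \<eta>"
    by (auto simp: tendsto_iff eventually_at dist_real_def)
  obtain N :: nat where N: "(\<bar>R\<bar> + 1) / s < real N"
    using reals_Archimedean2 by blast
  show "\<forall>\<^sub>F n in sequentially. \<forall>y\<in>{-R..R}.
      dist ((real n + 1) / D * (f (x0 + y / (real n + 1)) - f x0)) y < \<epsilon>"
    unfolding eventually_sequentially
  proof (intro exI[of _ N] allI impI ballI)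
    fix n y assume n: "N \<le> n" and y: "y \<in> {-R..R}"
    define h where "h = y / (real n + 1)"
    show "dist ((real n + 1) / D * (f (x0 + y / (real n + 1)) - f x0)) y < \<epsilon>"
    proof (cases "y = 0")
      case True
      then show ?thesis using \<epsilon> by simp
    next
      case False
      have yR: "\<bar>y\<bar> \<le> \<bar>R\<bar>" using y by auto
      have "\<bar>R\<bar> + 1 < s * real N" using N s by (simp add: divide_less_eq mult.commute)
      also have "\<dots> \<le> s * (real n + 1)" using n s by simp
      finally have "\<bar>h\<bar> < s" using yR by (simp add: h_def abs_div divide_less_eq)
      moreover have "h \<noteq> 0" using False by (simp add: h_def)
      ultimately have q: "\<bar>(f (x0 + h) - f x0) / h - D\<bar> < \<eta>"
        using quot by blast
      have "(real n + 1) / D * (f (x0 + h) - f x0) - y = y / D * ((f (x0 + h) - f x0) / h - D)"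
        using False D by (simp add: h_def field_simps)
      then have "\<bar>(real n + 1) / D * (f (x0 + h) - f x0) - y\<bar>
          = \<bar>y\<bar> / \<bar>D\<bar> * \<bar>(f (x0 + h) - f x0) / h - D\<bar>"
        by (simp add: abs_mult abs_div)
      also have "\<dots> \<le> \<bar>R\<bar> / \<bar>D\<bar> * \<eta>"
        using q yR D by (intro mult_mono divide_right_mono) auto
      also have "\<dots> = \<epsilon> * (\<bar>R\<bar> / (\<bar>R\<bar> + 1))"
        using D by (simp add: \<eta>_def)
      also have "\<dots> < \<epsilon>"
        using \<epsilon> by (simp add: divide_less_eq)
      finally show ?thesis by (simp add: h_def dist_real_def)
    qed
  qed
qed

section \<open>Networks with a scalar chain of hidden neurons\<close>

definition neuron :: "(real \<Rightarrow> real) \<Rightarrow> real \<Rightarrow> real \<Rightarrow> real \<Rightarrow> real \<Rightarrow> real \<Rightarrow> real" where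
  "neuron \<rho> \<kappa> \<alpha> \<beta> \<mu> t = \<kappa> * \<rho> (\<alpha> * t + \<beta>) + \<mu>"

lemma sum_lessThan_eq_initial:
  fixes f :: "nat \<Rightarrow> 'a::comm_monoid_add"
  assumes "k \<le> N" and "\<And>j. k \<le> j \<Longrightarrow> j < N \<Longrightarrow> f j = 0"
  shows "(\<Sum>j<N. f j) = (\<Sum>j<k. f j)"
  using assms by (intro sum.mono_neutral_right) auto

lemma sum_lessThan_first_two:
  fixes f :: "nat \<Rightarrow> 'a::comm_monoid_add"
  assumes "0 < N" and "2 \<le> N \<or> f 1 = 0" and "\<And>j. 2 \<le> j \<Longrightarrow> j < N \<Longrightarrow> f j = 0"
  shows "(\<Sum>j<N. f j) = f 0 + f 1"
proof (cases "N = 1")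
  case True
  then show ?thesis using assms(2) by simp
next
  case False
  then show ?thesis
    using assms sum_lessThan_eq_initial[of 2 N f] by (simp add: numeral_2_eq_2)
qed

lemma hidden_Suc_single_input:
  assumes "0 < S ! l" and "\<And>j. 0 < j \<Longrightarrow> A (Suc l) i j = 0"
  shows "hidden \<rho> S A b (Suc l) x i = \<rho> (A (Suc l) i 0 * hidden \<rho> S A b l x 0 + b (Suc l) i)"
  using sum_lessThan_eq_initial[of 1 "S ! l" "\<lambda>j. A (Suc l) i j * hidden \<rho> S A b l x j"] assms
  by simp

text \<open>The affine map after each chain neuron is absorbed into the weights of the next layer.\<close>

lemma in_RNN_neuron_chain:
  assumes S: "scalar_arch S" and width: "2 \<le> S ! (length S - 2) \<or> p' = 0"
  shows "in_RNN \<rho> S \<Omega> (\<lambda>x. let z = (neuron \<rho> \<kappa> \<alpha> \<beta> \<mu> ^^ (length S - 3)) (x 0) in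
           p * \<rho> (a * z + b) + p' * \<rho> (a' * z + b') + c)"
proof -
  have "3 \<le> length S" using S by (simp add: scalar_arch_def)
  then have "\<exists>K. length S = Suc (Suc (Suc K))" by presburger
  then obtain K where K: "length S = Suc (Suc (Suc K))" by blast
  define L where "L = Suc (Suc K)"
  have widths: "0 < S ! l" if "l \<le> L" for l
  proof -
    have "l < length S" using that K by (simp add: L_def)
    then show ?thesis using S unfolding scalar_arch_def by (auto dest!: spec[of _ l])
  qed
  define k where "k l = (if l = 0 then 1 else \<kappa>)" for l :: nat
  define m where "m l = (if l = 0 then 0 else \<mu>)" for l :: nat
  define A where "A l i j = (if l = L then (if i = 0 \<and> j = 0 then p else if i = 0 \<and> j = 1 then p' else 0)
      else if j \<noteq> 0 then 0
      else if l = Suc K then (if i = 0 then a * k K else if i = 1 then a' * k K else 0)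
      else if i = 0 then \<alpha> * k (l - 1) else 0)" for l i j :: nat
  define B where "B l i = (if l = L then (if i = 0 then c else 0)
      else if l = Suc K then (if i = 0 then a * m K + b else if i = 1 then a' * m K + b' else 0)
      else if i = 0 then \<alpha> * m (l - 1) + \<beta> else 0)" for l i :: nat
  define z where "z x = (neuron \<rho> \<kappa> \<alpha> \<beta> \<mu> ^^ K) (x 0)" for x :: "nat \<Rightarrow> real"
  have chain: "k l * hidden \<rho> S A B l x 0 + m l = (neuron \<rho> \<kappa> \<alpha> \<beta> \<mu> ^^ l) (x 0)"
    if "l \<le> K" for l x
    using that
  proof (induction l)
    case 0
    show ?case by (simp add: k_def m_def)
  next
    case (Suc l)
    have "hidden \<rho> S A B (Suc l) x 0 = \<rho> (\<alpha> * (k l * hidden \<rho> S A B l x 0 + m l) + \<beta>)"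
      using Suc.prems widths[of l]
      by (subst hidden_Suc_single_input) (auto simp: A_def B_def L_def algebra_simps)
    then show ?case using Suc by (simp add: k_def m_def neuron_def)
  qed
  have "hidden \<rho> S A B (Suc K) x i = \<rho> (A (Suc K) i 0 * hidden \<rho> S A B K x 0 + B (Suc K) i)"
    for x i
    using widths[of K] by (intro hidden_Suc_single_input) (auto simp: A_def L_def)
  then have last: "hidden \<rho> S A B (Suc K) x 0 = \<rho> (a * z x + b)"
    "hidden \<rho> S A B (Suc K) x 1 = \<rho> (a' * z x + b')" for x
    using chain[of K x, symmetric] by (simp_all del: hidden.simps add: A_def B_def L_def z_def algebra_simps)
  have "realization \<rho> S A B x = p * \<rho> (a * z x + b) + p' * \<rho> (a' * z x + b') + c" for x
    using sum_lessThan_first_two[of "S ! Suc K" "\<lambda>j. A L 0 j * hidden \<rho> S A B (Suc K) x j"]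
      width widths[of "Suc K"] K
    unfolding realization_def Let_def
    by (auto simp del: hidden.simps simp add: last last(2)[unfolded One_nat_def] A_def B_def L_def)
  then show ?thesis
    unfolding in_RNN_def z_def Let_def K by (intro exI[of _ A] exI[of _ B]) simp
qed

definition line :: "real \<Rightarrow> nat \<Rightarrow> real" where
  "line t = (\<lambda>i. if i = 0 then t else 0)"

lemma line_in_cube: "1 \<le> d \<Longrightarrow> \<bar>t\<bar> \<le> B \<Longrightarrow> line t \<in> cube d B"
  by (auto simp: line_def cube_def)

lemma hidden_line_Ck: "Ck m \<rho> \<Longrightarrow> Ck m (\<lambda>t. hidden \<rho> S A b l (line t) i)"
proof (induction l arbitrary: i)
  case 0
  then show ?case by (cases "i = 0") (auto simp: line_def Ck_ident Ck_const)
next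
  case (Suc l)
  have "Ck m (\<lambda>t. (\<Sum>j<S ! l. A (Suc l) i j * hidden \<rho> S A b l (line t) j) + b (Suc l) i)"
    using Suc by (intro Ck_add Ck_sum Ck_cmult Ck_const) auto
  then show ?case using Ck_compose[OF Suc.prems] by simp
qed

lemma realization_line_Ck: "Ck m \<rho> \<Longrightarrow> Ck m (\<lambda>t. realization \<rho> S A b (line t))"
  unfolding realization_def Let_def
  by (intro Ck_add Ck_sum Ck_cmult Ck_const hidden_line_Ck)

lemma RNN_not_closed_if_axis_limit:
  assumes S: "scalar_arch S" and B: "B > 0"
    and g: "\<And>n. in_RNN \<rho> S (cube (S ! 0) B) (\<lambda>x. g n (x 0))"
    and lim: "uniform_limit {-B..B} g F sequentially" and cont: "continuous_on {-B..B} F"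
    and not_realized: "\<And>A b. \<not> (\<forall>t\<in>{-B..B}. F t = realization \<rho> S A b (line t))"
  shows "RNN_not_closed \<rho> S (cube (S ! 0) B)"
proof -
  have d: "1 \<le> S ! 0" using S unfolding scalar_arch_def by (auto dest: spec[of _ 0])
  have axis: "(\<lambda>x. x 0) \<in> cube (S ! 0) B \<rightarrow> {-B..B}"
  proof
    fix x assume "x \<in> cube (S ! 0) B"
    then have "\<bar>x 0\<bar> \<le> B" using d by (auto simp: cube_def)
    then show "x 0 \<in> {-B..B}" by auto
  qed
  have "continuous_on (cube (S ! 0) B) (\<lambda>x. F (x 0))"
    by (rule continuous_on_compose2[OF cont continuous_on_subset[OF continuous_on_product_coordinates]])
      (use axis in auto)
  moreover have "uniform_limit (cube (S ! 0) B) (\<lambda>n x. g n (x 0)) (\<lambda>x. F (x 0)) sequentially"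
    using uniform_limit_compose'[OF lim axis] .
  moreover have "\<not> in_RNN \<rho> S (cube (S ! 0) B) (\<lambda>x. F (x 0))"
  proof
    assume "in_RNN \<rho> S (cube (S ! 0) B) (\<lambda>x. F (x 0))"
    then obtain A b where Ab: "\<And>x. x \<in> cube (S ! 0) B \<Longrightarrow> F (x 0) = realization \<rho> S A b x"
      unfolding in_RNN_def by blast
    have "F t = realization \<rho> S A b (line t)" if "t \<in> {-B..B}" for t
    proof -
      have "\<bar>t\<bar> \<le> B" using that by auto
      from Ab[OF line_in_cube[OF d this]] show ?thesis by (simp add: line_def)
    qed
    then have "\<forall>t\<in>{-B..B}. F t = realization \<rho> S A b (line t)" by blast
    with not_realized show False by blast
  qed
  ultimately show ?thesis
    unfolding RNN_not_closed_def using g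
    by (intro exI[of _ "\<lambda>n x. g n (x 0)"] exI[of _ "\<lambda>x. F (x 0)"]) auto
qed

lemma neuron_identity_uniform_limit:
  assumes "(\<rho> has_real_derivative D) (at x0)" and "D \<noteq> 0"
  shows "uniform_limit {-R..R}
    (\<lambda>n. neuron \<rho> ((real n + 1) / D) (1 / (real n + 1)) x0 (- (real n + 1) / D * \<rho> x0))
    (\<lambda>y. y) sequentially"
proof -
  have "neuron \<rho> ((real n + 1) / D) (1 / (real n + 1)) x0 (- (real n + 1) / D * \<rho> x0)
      = (\<lambda>y. (real n + 1) / D * (\<rho> (x0 + y / (real n + 1)) - \<rho> x0))" for n
    using assms(2) by (intro ext) (simp add: neuron_def field_simps)
  then show ?thesis
    using rescaled_increment_uniform_limit[OF assms] by simp
qed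

lemma RNN_not_closed_if_last_layer_limit:
  assumes der: "(\<rho> has_real_derivative D) (at x0)" "D \<noteq> 0"
    and S: "scalar_arch S" and B: "B > 0"
    and width: "2 \<le> S ! (length S - 2) \<or> (\<forall>n. p' n = 0)"
    and out: "\<And>R. uniform_limit {-R..R}
      (\<lambda>n y. p n * \<rho> (a n * y + b n) + p' n * \<rho> (a' n * y + b' n) + c n) F sequentially"
    and cont: "continuous_on UNIV F"
    and not_realized: "\<And>A \<beta>. \<not> (\<forall>t\<in>{-B..B}. F t = realization \<rho> S A \<beta> (line t))"
  shows "RNN_not_closed \<rho> S (cube (S ! 0) B)"
proof -
  define N where "N n = neuron \<rho> ((real n + 1) / D) (1 / (real n + 1)) x0 (- (real n + 1) / D * \<rho> x0)"
    for n
  define g where "g n t = (let z = (N n ^^ (length S - 3)) t in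
      p n * \<rho> (a n * z + b n) + p' n * \<rho> (a' n * z + b' n) + c n)" for n t
  have "in_RNN \<rho> S (cube (S ! 0) B) (\<lambda>x. g n (x 0))" for n
    unfolding g_def N_def using in_RNN_neuron_chain[OF S] width by blast
  moreover have "uniform_limit {-B..B} g F sequentially"
  proof -
    have "uniform_limit {-R..R} N (\<lambda>y. y) sequentially" for R
      unfolding N_def by (rule neuron_identity_uniform_limit[OF der])
    moreover have "bounded ((\<lambda>t. t) ` {-B..B})" by simp
    ultimately have "uniform_limit {-B..B} (\<lambda>n t. (N n ^^ (length S - 3)) t) (\<lambda>t. t) sequentially"
      using uniform_limit_funpow[where k = "length S - 3"] uniform_limit_const by blast
    from uniform_limit_compose_locally_uniform[OF out cont this] show ?thesis
      by (simp add: g_def[abs_def] Let_def)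
  qed
  ultimately show ?thesis
    using RNN_not_closed_if_axis_limit[OF S B] cont not_realized
    by (meson continuous_on_subset subset_UNIV)
qed

lemma locally_Ck_if_realization_on_axis:
  assumes \<rho>: "Ck m \<rho>" and B: "B > 0"
    and agree: "\<forall>t\<in>{-B..B}. f (t + x) = realization \<rho> S A b (line t)"
  shows "locally_Ck m f x"
proof -
  have "Ck m (\<lambda>y. realization \<rho> S A b (line (y - x)))"
    using Ck_compose[OF realization_line_Ck[OF \<rho>] Ck_add[OF Ck_ident Ck_const[of m "- x"]]] by simp
  moreover have "\<forall>\<^sub>F y in nhds x. realization \<rho> S A b (line (y - x)) = f y"
    unfolding eventually_nhds_metric dist_real_def
  proof (intro exI[of _ B] conjI allI impI)
    fix y assume "\<bar>y - x\<bar> < B"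
    then have "y - x \<in> {-B..B}" by auto
    then show "realization \<rho> S A b (line (y - x)) = f y" using agree by force
  qed (use B in simp)
  ultimately show ?thesis unfolding locally_Ck_def by blast
qed

section \<open>Activation functions in C^1 but not in C^infinity\<close>

theorem C1_not_Cinf_RNN_not_closed:
  assumes C1: "C1 \<rho>" and not_Cinf: "\<not> Cinf \<rho>"
    and S: "scalar_arch S" "2 \<le> S ! (length S - 2)" and B: "B > 0"
  shows "RNN_not_closed \<rho> S (cube (S ! 0) B)"
proof -
  obtain m x1 where m: "Ck m \<rho>" and not_loc: "\<not> locally_Ck m (deriv \<rho>) x1"
    using C1_not_Cinf_obtain_order[OF C1 not_Cinf] by blast
  have der: "\<And>x. (\<rho> has_real_derivative deriv \<rho> x) (at x)" and cont: "continuous_on UNIV (deriv \<rho>)"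
    using C1 by (auto simp: C1_iff_Ck_1 Ck_Suc_deriv Ck_0)
  have "deriv \<rho> \<noteq> (\<lambda>_. 0)"
    using not_loc Ck_imp_locally_Ck[OF Ck_const] by metis
  then obtain x0 where x0: "deriv \<rho> x0 \<noteq> 0" by auto
  txt \<open>The last hidden layer computes difference quotients of \<open>\<rho>\<close> at \<open>y + x1\<close>.\<close>
  define F where "F t = deriv \<rho> (t + x1)" for t
  have der_F: "((\<lambda>y. \<rho> (y + x1)) has_real_derivative F y) (at y)" for y
    using der[of "y + x1"] by (simp add: F_def DERIV_shift)
  have cont_F: "continuous_on UNIV F"
    unfolding F_def by (intro continuous_on_compose2[OF cont] continuous_intros) auto
  show ?thesis
  proof (rule RNN_not_closed_if_last_layer_limit[where F = F
        and p = "\<lambda>n. real n + 1" and a = "\<lambda>n. 1" and b = "\<lambda>n. 1 / (real n + 1) + x1"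
        and p' = "\<lambda>n. - (real n + 1)" and a' = "\<lambda>n. 1" and b' = "\<lambda>n. x1" and c = "\<lambda>n. 0",
        OF der x0 S(1) B])
    show "uniform_limit {-R..R} (\<lambda>n y. (real n + 1) * \<rho> (1 * y + (1 / (real n + 1) + x1))
        + - (real n + 1) * \<rho> (1 * y + x1) + 0) F sequentially" for R
      using difference_quotient_uniform_limit[OF der_F cont_F, of R]
      by (simp add: algebra_simps)
    show "\<not> (\<forall>t\<in>{-B..B}. F t = realization \<rho> S A b (line t))" for A b
    proof
      assume "\<forall>t\<in>{-B..B}. F t = realization \<rho> S A b (line t)"
      then have "locally_Ck m (deriv \<rho>) x1"
        unfolding F_def by (rule locally_Ck_if_realization_on_axis[OF m B])
      with not_loc show False by contradiction
    qed
  qed (use S cont_F in auto)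
qed

section \<open>Softplus\<close>

lemma softplus_bounds: "max 0 y \<le> softplus y \<and> softplus y \<le> max 0 y + 1"
proof -
  have pos: "0 < 1 + exp y" by (simp add: add_pos_pos)
  have "exp (max 0 y) \<le> 1 + exp y" by (cases "0 \<le> y") auto
  then have lower: "max 0 y \<le> softplus y"
    unfolding softplus_def using pos by (subst ln_ge_iff) auto
  have "1 + exp y \<le> 2 * exp (max 0 y)" by (cases "0 \<le> y") auto
  also have "\<dots> \<le> exp 1 * exp (max 0 y)"
    using exp_ge_add_one_self[of 1] by (intro mult_right_mono) auto
  also have "\<dots> = exp (max 0 y + 1)" by (simp add: exp_add)
  finally have "ln (1 + exp y) \<le> ln (exp (max 0 y + 1))"
    using pos by (subst ln_le_cancel_iff) auto
  then show ?thesis using lower by (simp add: softplus_def)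
qed

lemma softplus_deriv: "(softplus has_real_derivative exp x / (1 + exp x)) (at x)"
  unfolding softplus_def[abs_def] by (auto intro!: derivative_eq_intros simp: add_pos_pos)

lemma softplus_C1: "C1 softplus"
proof -
  have "1 + exp x \<noteq> 0" for x :: real by (smt (verit) exp_gt_zero)
  then show ?thesis
    unfolding C1_def
    by (intro exI[of _ "\<lambda>x. exp x / (1 + exp x)"] conjI allI softplus_deriv)
      (auto intro!: continuous_intros)
qed

lemma softplus_approx_homogeneous: "approx_homogeneous 1 0 softplus"
  unfolding approx_homogeneous_def
proof (intro exI[of _ 1] conjI allI impI)
  fix x :: real
  show "0 \<le> x \<Longrightarrow> \<bar>softplus x - x ^ 1\<bar> \<le> 1" using softplus_bounds[of x] by auto
  show "x \<le> 0 \<Longrightarrow> \<bar>softplus x - x ^ 0\<bar> \<le> 1" using softplus_bounds[of x] by auto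
qed simp

lemma softplus_steep_uniform_limit:
  "uniform_limit X (\<lambda>n y. 1 / (real n + 1) * softplus (- (real n + 1) * y)) (\<lambda>y. max 0 (- y))
     sequentially"
proof (rule uniform_limitI)
  fix \<epsilon> :: real assume "\<epsilon> > 0"
  then obtain N where N: "inverse (real (Suc N)) < \<epsilon>" using reals_Archimedean by blast
  have "\<bar>1 / (real n + 1) * softplus (- (real n + 1) * y) - max 0 (- y)\<bar> < \<epsilon>" if "N \<le> n" for n y
  proof -
    have "max 0 (- (real n + 1) * y) = (real n + 1) * max 0 (- y)"
    proof (cases "y \<le> 0")
      case True
      then have "0 \<le> - (real n + 1) * y" by (simp add: mult_nonpos_nonpos)
      then show ?thesis using True by (simp add: algebra_simps)
    next
      case False
      then have "- (real n + 1) * y \<le> 0" by (simp add: mult_nonpos_nonneg)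
      then show ?thesis using False by simp
    qed
    then have "\<bar>1 / (real n + 1) * softplus (- (real n + 1) * y) - max 0 (- y)\<bar>
        = \<bar>softplus (- (real n + 1) * y) - max 0 (- (real n + 1) * y)\<bar> / (real n + 1)"
      by (simp add: field_simps)
    also have "\<dots> \<le> 1 / (real n + 1)"
      using softplus_bounds[of "- (real n + 1) * y"] by (intro divide_right_mono) auto
    also have "\<dots> \<le> inverse (real (Suc N))"
      using that by (simp add: divide_simps)
    finally show ?thesis using N by linarith
  qed
  then show "\<forall>\<^sub>F n in sequentially. \<forall>y\<in>X.
      dist (1 / (real n + 1) * softplus (- (real n + 1) * y)) (max 0 (- y)) < \<epsilon>"
    unfolding eventually_sequentially by (auto simp: dist_real_def)
qed

theorem softplus_RNN_not_closed:
  assumes S: "scalar_arch S" and B: "B > 0"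
  shows "RNN_not_closed softplus S (cube (S ! 0) B)"
proof -
  define F where "F t = max 0 (- t)" for t :: real
  have der: "(softplus has_real_derivative 1 / 2) (at 0)"
    using softplus_deriv[of 0] by simp
  show ?thesis
  proof (rule RNN_not_closed_if_last_layer_limit[where F = F
        and p = "\<lambda>n. 1 / (real n + 1)" and a = "\<lambda>n. - (real n + 1)" and b = "\<lambda>n. 0"
        and p' = "\<lambda>n. 0" and c = "\<lambda>n. 0", OF der _ S B])
    show "uniform_limit {-R..R} (\<lambda>n y. 1 / (real n + 1) * softplus (- (real n + 1) * y + 0)
        + 0 * softplus (a' n * y + b' n) + 0) F sequentially" for R a' b'
      using softplus_steep_uniform_limit by (simp add: F_def[abs_def])
    show "continuous_on UNIV F"
      unfolding F_def by (intro continuous_intros)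
    show "\<not> (\<forall>t\<in>{-B..B}. F t = realization softplus S A b (line t))" for A b
    proof
      assume "\<forall>t\<in>{-B..B}. F t = realization softplus S A b (line t)"
      then have "\<forall>t\<in>{-B..B}. F (t + 0) = realization softplus S A b (line t)" by simp
      then have "locally_Ck 1 F 0"
        by (rule locally_Ck_if_realization_on_axis[OF softplus_C1[unfolded C1_iff_Ck_1] B])
      moreover have "\<not> locally_Ck 1 F 0"
        by (rule not_locally_Ck_flat_right[of 1 1 1]) (auto simp: F_def)
      ultimately show False by contradiction
    qed
  qed auto
qed

section \<open>Bounded activation functions with a holomorphic extension\<close>

definition has_holomorphic_extension :: "(real \<Rightarrow> real) \<Rightarrow> bool" where
  "has_holomorphic_extension f \<longleftrightarrow> (\<exists>U F. open U \<and> range complex_of_real \<subseteq> U \<and> F holomorphic_on U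
      \<and> (\<forall>x. F (of_real x) = of_real (f x)))"

lemma has_holomorphic_extension_strip:
  assumes "\<delta> > 0" and "F holomorphic_on {z. \<bar>Im z\<bar> < \<delta>}" and "\<And>x. F (of_real x) = of_real (f x)"
  shows "has_holomorphic_extension f"
proof -
  have "open {z. \<bar>Im z\<bar> < \<delta>}" by (intro open_Collect_less continuous_intros)
  then show ?thesis
    unfolding has_holomorphic_extension_def using assms
    by (intro exI[of _ "{z. \<bar>Im z\<bar> < \<delta>}"] exI[of _ F]) auto
qed

lemma real_analytic_if_holomorphic_extension:
  assumes "has_holomorphic_extension f"
  shows "real_analytic f"
  unfolding real_analytic_def
proof
  fix x0 :: real
  obtain U F where U: "open U" "range complex_of_real \<subseteq> U" and hol: "F holomorphic_on U"
    and FR: "\<And>x. F (of_real x) = of_real (f x)"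
    using assms unfolding has_holomorphic_extension_def by blast
  have "of_real x0 \<in> U" using U(2) by auto
  then obtain r where r: "r > 0" "ball (of_real x0) r \<subseteq> U"
    using open_contains_ball_eq[OF U(1)] by blast
  define a where "a n = (deriv ^^ n) F (of_real x0) / fact n" for n
  have "(\<lambda>n. Re (a n) * (x - x0) ^ n) sums f x" if "\<bar>x - x0\<bar> < r" for x
  proof -
    have "of_real x \<in> ball (of_real x0 :: complex) r"
      using that by (simp add: dist_real_def abs_minus_commute)
    from holomorphic_power_series[OF holomorphic_on_subset[OF hol r(2)] this]
    have "(\<lambda>n. a n * (of_real x - of_real x0) ^ n) sums F (of_real x)"
      by (simp add: a_def)
    then have "(\<lambda>n. Re (a n * (of_real x - of_real x0) ^ n)) sums Re (F (of_real x))"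
      by (rule sums_Re)
    moreover have "Re (a n * (of_real x - of_real x0) ^ n) = Re (a n) * (x - x0) ^ n" for n
    proof -
      have "(of_real x - of_real x0 :: complex) ^ n = of_real ((x - x0) ^ n)" by simp
      then show ?thesis by simp
    qed
    ultimately show ?thesis using FR by simp
  qed
  then show "\<exists>r>0. \<exists>c. \<forall>x. \<bar>x - x0\<bar> < r \<longrightarrow> (\<lambda>n. c n * (x - x0) ^ n) sums f x"
    using r(1) by (intro exI[of _ r] conjI exI[of _ "\<lambda>n. Re (a n)"]) auto
qed

lemma has_holomorphic_extension_imp_DERIV:
  assumes "has_holomorphic_extension f"
  obtains f' where "\<And>x. (f has_real_derivative f' x) (at x)"
proof -
  obtain U F where U: "open U" "range complex_of_real \<subseteq> U" and hol: "F holomorphic_on U"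
    and FR: "\<And>x. F (of_real x) = of_real (f x)"
    using assms unfolding has_holomorphic_extension_def by blast
  have "F field_differentiable at (of_real x)" for x
    using holomorphic_on_imp_differentiable_at[OF hol U(1)] U(2) by blast
  then have "(F has_field_derivative deriv F (of_real x)) (at (of_real x))" for x
    by (simp add: DERIV_deriv_iff_field_differentiable)
  then have "((\<lambda>x. F (of_real x)) has_vector_derivative deriv F (of_real x)) (at x)" for x
    by (rule has_vector_derivative_real_field)
  then have "((\<lambda>x. Re (F (of_real x))) has_real_derivative Re (deriv F (of_real x))) (at x)" for x
    by (rule has_field_derivative_Re)
  then have "(f has_real_derivative Re (deriv F (of_real x))) (at x)" for x
    using FR by simp
  then show ?thesis by (rule that)
qed

fun hidden_complex :: "(complex \<Rightarrow> complex) \<Rightarrow> nat list \<Rightarrow> (nat \<Rightarrow> nat \<Rightarrow> nat \<Rightarrow> real)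
    \<Rightarrow> (nat \<Rightarrow> nat \<Rightarrow> real) \<Rightarrow> nat \<Rightarrow> complex \<Rightarrow> nat \<Rightarrow> complex" where
  "hidden_complex F S A b 0 z = (\<lambda>i. if i = 0 then z else 0)"
| "hidden_complex F S A b (Suc l) z =
     (\<lambda>i. F ((\<Sum>j<S ! l. of_real (A (Suc l) i j) * hidden_complex F S A b l z j) + of_real (b (Suc l) i)))"

lemma hidden_complex_of_real:
  assumes FR: "\<And>x. F (of_real x) = of_real (\<rho> x)"
  shows "hidden_complex F S A b l (of_real t) i = of_real (hidden \<rho> S A b l (line t) i)"
proof (induction l arbitrary: i)
  case 0
  then show ?case by (simp add: line_def)
next
  case (Suc l)
  have "(\<Sum>j<S ! l. of_real (A (Suc l) i j) * hidden_complex F S A b l (of_real t) j) + of_real (b (Suc l) i)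
      = (of_real ((\<Sum>j<S ! l. A (Suc l) i j * hidden \<rho> S A b l (line t) j) + b (Suc l) i) :: complex)"
    using Suc by simp
  then show ?case by (simp only: hidden_complex.simps hidden.simps FR)
qed

lemma hidden_complex_holomorphic:
  assumes U: "open U" "range complex_of_real \<subseteq> U" and hol: "F holomorphic_on U"
    and FR: "\<And>x. F (of_real x) = of_real (\<rho> x)"
  shows "\<exists>V. open V \<and> range complex_of_real \<subseteq> V \<and>
    (\<forall>i<S ! l. (\<lambda>z. hidden_complex F S A b l z i) holomorphic_on V)"
proof (induction l)
  case 0
  have "(\<lambda>z. hidden_complex F S A b 0 z i) holomorphic_on UNIV" for i
    by (cases "i = 0") (auto intro: holomorphic_intros)
  then show ?case by blast
next
  case (Suc l)
  then obtain V where V: "open V" "range complex_of_real \<subseteq> V"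
    and holV: "\<And>i. i < S ! l \<Longrightarrow> (\<lambda>z. hidden_complex F S A b l z i) holomorphic_on V" by blast
  define p where "p i z = (\<Sum>j<S ! l. of_real (A (Suc l) i j) * hidden_complex F S A b l z j)
      + of_real (b (Suc l) i)" for i z
  have hol_p: "p i holomorphic_on V" for i
    unfolding p_def by (intro holomorphic_intros holV) auto
  txt \<open>Shrink \<open>V\<close> so that all pre-activations stay in the domain \<open>U\<close> of \<open>F\<close>.\<close>
  define V' where "V' = V \<inter> (\<Inter>i\<in>{..<S ! Suc l}. V \<inter> p i -` U)"
  have "open V'" unfolding V'_def
    using continuous_open_preimage[OF holomorphic_on_imp_continuous_on[OF hol_p] V(1) U(1)]
    by (intro open_Int open_INT V(1)) auto
  moreover have "range complex_of_real \<subseteq> V'"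
  proof
    fix z assume "z \<in> range complex_of_real"
    then obtain t where z: "z = of_real t" by blast
    have "p i z \<in> U" for i
    proof -
      have "p i z = of_real ((\<Sum>j<S ! l. A (Suc l) i j * hidden \<rho> S A b l (line t) j) + b (Suc l) i)"
        unfolding p_def z by (simp add: hidden_complex_of_real[where F = F and \<rho> = \<rho>, OF FR])
      then show ?thesis using U(2) by (metis rangeI subsetD)
    qed
    then show "z \<in> V'" using V(2) z by (auto simp: V'_def)
  qed
  moreover have "(\<lambda>z. hidden_complex F S A b (Suc l) z i) holomorphic_on V'" if "i < S ! Suc l" for i
  proof -
    have "p i holomorphic_on V'" by (rule holomorphic_on_subset[OF hol_p]) (auto simp: V'_def)
    moreover have "p i ` V' \<subseteq> U" using that by (auto simp: V'_def)
    ultimately have "(F \<circ> p i) holomorphic_on V'" by (rule holomorphic_on_compose_gen[OF _ hol])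
    then show ?thesis by (simp add: p_def o_def)
  qed
  ultimately show ?case by blast
qed

lemma realization_line_holomorphic_extension:
  assumes "open U" "range complex_of_real \<subseteq> U" and "F holomorphic_on U"
    and FR: "\<And>x. F (of_real x) = of_real (\<rho> x)"
  obtains V R where "open V" "range complex_of_real \<subseteq> V" "R holomorphic_on V"
    "\<And>t. R (of_real t) = of_real (realization \<rho> S A b (line t))"
proof -
  define L where "L = length S - 1"
  obtain V where V: "open V" "range complex_of_real \<subseteq> V"
    and holV: "\<And>i. i < S ! (L - 1) \<Longrightarrow> (\<lambda>z. hidden_complex F S A b (L - 1) z i) holomorphic_on V"
    using hidden_complex_holomorphic[OF assms, of S "L - 1" A b] by blast
  define R where "R z = (\<Sum>j<S ! (L - 1). of_real (A L 0 j) * hidden_complex F S A b (L - 1) z j)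
      + of_real (b L 0)" for z
  have "R holomorphic_on V" unfolding R_def by (intro holomorphic_intros holV) auto
  moreover have "R (of_real t) = of_real (realization \<rho> S A b (line t))" for t
    unfolding R_def realization_def Let_def L_def[symmetric]
    by (simp add: hidden_complex_of_real[where F = F and \<rho> = \<rho>, OF FR])
  ultimately show ?thesis using that V by blast
qed

lemma realization_bounded:
  assumes "bounded (range \<rho>)" and "3 \<le> length S"
  shows "bounded (range (realization \<rho> S A b))"
proof -
  obtain M where M: "\<And>x. \<bar>\<rho> x\<bar> \<le> M" using assms(1) by (auto simp: bounded_iff)
  define L where "L = length S - 1"
  obtain k where k: "L - 1 = Suc k" using assms(2) by (intro that[of "length S - 3"]) (simp add: L_def)
  define K where "K = (\<Sum>j<S ! (L - 1). \<bar>A L 0 j\<bar> * M) + \<bar>b L 0\<bar>"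
  have "\<bar>realization \<rho> S A b x\<bar> \<le> K" for x
  proof -
    have "\<bar>realization \<rho> S A b x\<bar> \<le> (\<Sum>j<S ! (L - 1). \<bar>A L 0 j * hidden \<rho> S A b (L - 1) x j\<bar>) + \<bar>b L 0\<bar>"
      unfolding realization_def Let_def L_def[symmetric]
      by (rule order_trans[OF abs_triangle_ineq add_right_mono[OF sum_abs]])
    also have "\<dots> \<le> K"
      unfolding k K_def using M by (intro add_right_mono sum_mono) (simp add: abs_mult mult_left_mono)
    finally show ?thesis .
  qed
  then show ?thesis unfolding bounded_iff by (intro exI[of _ K]) auto
qed

lemma holomorphic_id_on_interval_imp_id_on_reals:
  assumes V: "open V" "range complex_of_real \<subseteq> V" and hol: "R holomorphic_on V" and B: "B > 0"
    and id: "\<And>t. t \<in> {-B..B} \<Longrightarrow> R (of_real t) = of_real t"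
  shows "R (of_real x) = of_real x"
proof -
  define C where "C = connected_component_set V 0"
  have real_C: "range complex_of_real \<subseteq> C"
    unfolding C_def
  proof (rule connected_component_maximal)
    show "0 \<in> range complex_of_real" by (metis of_real_0 rangeI)
    show "connected (range complex_of_real)"
      by (rule connected_continuous_image) (auto intro: continuous_intros)
  qed (use V in auto)
  have "R (of_real x) - of_real x = 0"
  proof (rule analytic_continuation[of "\<lambda>z. R z - z" C "complex_of_real ` {-B..B}" 0])
    have "R holomorphic_on C"
      unfolding C_def by (rule holomorphic_on_subset[OF hol connected_component_subset])
    then show "(\<lambda>z. R z - z) holomorphic_on C" by (intro holomorphic_intros)
    show "open C" unfolding C_def by (rule open_connected_component[OF V(1)])
    show "connected C" by (simp add: C_def)
    show "complex_of_real ` {-B..B} \<subseteq> C" "0 \<in> C" "complex_of_real x \<in> C"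
      using real_C by auto
    show "0 islimpt complex_of_real ` {-B..B}"
      unfolding islimpt_approachable
    proof (intro allI impI)
      fix e :: real assume "e > 0"
      then show "\<exists>x'\<in>complex_of_real ` {-B..B}. x' \<noteq> 0 \<and> dist x' 0 < e"
        using B by (intro bexI[of _ "of_real (min B (e / 2))"]) auto
    qed
    show "R z - z = 0" if "z \<in> complex_of_real ` {-B..B}" for z
      using that id by auto
  qed
  then show ?thesis by simp
qed

lemma realization_on_axis_not_identity:
  assumes bdd: "bounded (range \<rho>)" and ext: "has_holomorphic_extension \<rho>"
    and S: "scalar_arch S" and B: "B > 0"
  shows "\<not> (\<forall>t\<in>{-B..B}. t = realization \<rho> S A b (line t))"
proof
  assume id: "\<forall>t\<in>{-B..B}. t = realization \<rho> S A b (line t)"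
  obtain U F where U: "open U" "range complex_of_real \<subseteq> U" "F holomorphic_on U"
    and FR: "\<And>x. F (of_real x) = of_real (\<rho> x)"
    using ext unfolding has_holomorphic_extension_def by blast
  obtain V R where V: "open V" "range complex_of_real \<subseteq> V" and hol: "R holomorphic_on V"
    and RR: "\<And>t. R (of_real t) = of_real (realization \<rho> S A b (line t))"
    using realization_line_holomorphic_extension[where S = S and A = A and b = b, OF U FR] by blast
  obtain K where K: "\<And>x. \<bar>realization \<rho> S A b x\<bar> \<le> K"
    using realization_bounded[OF bdd] S by (fastforce simp: scalar_arch_def bounded_iff)
  have "R (of_real (K + 1)) = of_real (K + 1)"
    by (rule holomorphic_id_on_interval_imp_id_on_reals[OF V hol B]) (use id RR in auto)
  then have "complex_of_real (realization \<rho> S A b (line (K + 1))) = complex_of_real (K + 1)"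
    by (simp only: RR)
  then have "realization \<rho> S A b (line (K + 1)) = K + 1"
    by (simp only: of_real_eq_iff)
  with K[of "line (K + 1)"] show False by simp
qed

theorem bounded_holomorphic_RNN_not_closed:
  assumes bdd: "bounded (range \<rho>)" and ext: "has_holomorphic_extension \<rho>"
    and nonconst: "\<exists>x y. \<rho> x \<noteq> \<rho> y" and S: "scalar_arch S" and B: "B > 0"
  shows "RNN_not_closed \<rho> S (cube (S ! 0) B)"
proof -
  obtain \<rho>' where der: "\<And>x. (\<rho> has_real_derivative \<rho>' x) (at x)"
    using has_holomorphic_extension_imp_DERIV[OF ext] by blast
  obtain x0 where "\<rho>' x0 \<noteq> 0"
    using nonconst der DERIV_isconst_all by metis
  define D where "D = \<rho>' x0"
  have D: "D \<noteq> 0" and der0: "(\<rho> has_real_derivative D) (at x0)"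
    using \<open>\<rho>' x0 \<noteq> 0\<close> der by (auto simp: D_def)
  show ?thesis
  proof (rule RNN_not_closed_if_last_layer_limit[where F = "\<lambda>y. y"
        and p = "\<lambda>n. (real n + 1) / D" and a = "\<lambda>n. 1 / (real n + 1)" and b = "\<lambda>n. x0"
        and p' = "\<lambda>n. 0" and c = "\<lambda>n. - (real n + 1) / D * \<rho> x0", OF der0 D S B])
    show "uniform_limit {-R..R} (\<lambda>n y. (real n + 1) / D * \<rho> (1 / (real n + 1) * y + x0)
        + 0 * \<rho> (a' n * y + b' n) + - (real n + 1) / D * \<rho> x0) (\<lambda>y. y) sequentially" for R a' b'
      using neuron_identity_uniform_limit[OF der0 D, of R]
      unfolding neuron_def[abs_def] by (simp add: algebra_simps)
    show "\<not> (\<forall>t\<in>{-B..B}. t = realization \<rho> S A b (line t))" for A b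
      by (rule realization_on_axis_not_identity[OF bdd ext S B])
  qed auto
qed

section \<open>The activation functions\<close>

lemma DERIV_if_nonneg:
  fixes f g :: "real \<Rightarrow> real"
  assumes f: "\<And>x. 0 \<le> x \<Longrightarrow> (f has_real_derivative f' x) (at x)"
    and g: "\<And>x. x \<le> 0 \<Longrightarrow> (g has_real_derivative g' x) (at x)"
    and "f 0 = g 0" and "f' 0 = g' 0"
  shows "((\<lambda>x. if 0 \<le> x then f x else g x) has_real_derivative (if 0 \<le> x then f' x else g' x)) (at x)"
proof -
  have "((\<lambda>x. if x \<in> {0..} then f x else g x) has_vector_derivative
      (if x \<in> {0..} then f' x else g' x)) (at x within UNIV)"
    by (rule has_vector_derivative_If_within_closures[where T = "{..0}"])
      (use assms in \<open>auto simp flip: has_real_derivative_iff_has_vector_derivative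
        intro: has_field_derivative_at_within\<close>)
  then show ?thesis by (simp add: has_real_derivative_iff_has_vector_derivative)
qed

lemma relu_pow_Suc_DERIV:
  assumes "1 \<le> j"
  shows "(relu_pow (Suc j) has_real_derivative real (Suc j) * relu_pow j x) (at x)"
proof -
  have eq: "relu_pow i = (\<lambda>x. if 0 \<le> x then x ^ i else 0)" if "1 \<le> i" for i
    using that by (auto simp: relu_pow_def max_def fun_eq_iff)
  have "((\<lambda>x. if 0 \<le> x then x ^ Suc j else 0) has_real_derivative
      (if 0 \<le> x then real (Suc j) * x ^ j else 0)) (at x)"
  proof (rule DERIV_if_nonneg)
    show "((\<lambda>x. x ^ Suc j) has_real_derivative real (Suc j) * x ^ j) (at x)" for x :: real
      using DERIV_pow[of "Suc j" x] by simp
  qed (use assms in auto)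
  moreover have "(if 0 \<le> x then real (Suc j) * x ^ j else 0) = real (Suc j) * relu_pow j x"
    using assms by (simp add: eq)
  ultimately show ?thesis using assms by (simp add: eq)
qed

lemma relu_pow_C1: "2 \<le> k \<Longrightarrow> C1 (relu_pow k)"
proof -
  assume "2 \<le> k"
  then obtain j where k: "k = Suc j" and j: "1 \<le> j" by (metis Suc_le_D Suc_le_mono one_add_one plus_1_eq_Suc)
  have "continuous_on UNIV (\<lambda>x. real (Suc j) * relu_pow j x)"
    unfolding relu_pow_def by (intro continuous_intros)
  then show ?thesis
    unfolding C1_def k using relu_pow_Suc_DERIV[OF j]
    by (intro exI[of _ "\<lambda>x. real (Suc j) * relu_pow j x"]) blast
qed

lemma relu_pow_not_Cinf: "2 \<le> k \<Longrightarrow> \<not> Cinf (relu_pow k)"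
proof -
  assume "2 \<le> k"
  then obtain j where k: "k = Suc j" and j: "1 \<le> j" by (metis Suc_le_D Suc_le_mono one_add_one plus_1_eq_Suc)
  define g where "g x = real (Suc j) * relu_pow j x" for x
  have "\<not> locally_Ck j (\<lambda>u. g (- u)) 0"
  proof (rule not_locally_Ck_flat_right[of j 1 1])
    show "g (- u) = g (- 0)" if "0 \<le> u" for u
      using that j by (simp add: g_def relu_pow_def max_def zero_power)
    show "1 * \<bar>u\<bar> ^ j \<le> \<bar>g (- u) - g (- 0)\<bar>" if "- 1 < u" "u < 0" for u
    proof -
      have "g (- u) = real (Suc j) * \<bar>u\<bar> ^ j" "g (- 0) = 0"
        using that j by (simp_all add: g_def relu_pow_def max_def)
      then show ?thesis by (simp add: abs_mult mult_le_cancel_right1)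
    qed
  qed (use j in auto)
  then have "\<not> locally_Ck j g 0"
    using locally_Ck_reflect[of j g 0] by auto
  then show ?thesis
    unfolding k by (rule not_Cinf_if_deriv_not_locally_Ck[OF relu_pow_Suc_DERIV[OF j, folded g_def]])
qed

lemma elu_DERIV: "(elu has_real_derivative exp (min x 0)) (at x)"
proof -
  have "((\<lambda>x. if 0 \<le> x then x else exp x - 1) has_real_derivative (if 0 \<le> x then 1 else exp x)) (at x)"
    by (rule DERIV_if_nonneg) (auto intro!: derivative_eq_intros)
  moreover have "elu = (\<lambda>x. if 0 \<le> x then x else exp x - 1)"
    by (simp add: elu_def fun_eq_iff)
  moreover have "(if 0 \<le> x then 1 else exp x) = exp (min x 0)"
    by (auto simp: min_def)
  ultimately show ?thesis by simp
qed

lemma elu_C1: "C1 elu"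
  unfolding C1_def using elu_DERIV by (intro exI[of _ "\<lambda>x. exp (min x 0)"]) (auto intro!: continuous_intros)

lemma elu_not_Cinf: "\<not> Cinf elu"
proof -
  have "\<not> locally_Ck 1 (\<lambda>x. exp (min x 0)) 0"
  proof (rule not_locally_Ck_flat_right[of 1 1 "exp (- 1)"])
    fix u :: real assume u: "- 1 < u" "u < 0"
    have "exp (- 1) * (- u) \<le> exp u * (exp (- u) - 1)"
      using u exp_ge_add_one_self[of "- u"] by (intro mult_mono) auto
    also have "\<dots> = 1 - exp u" by (simp add: algebra_simps exp_minus)
    finally show "exp (- 1) * \<bar>u\<bar> ^ 1 \<le> \<bar>exp (min u 0) - exp (min 0 0)\<bar>"
      using u by (simp add: min_def)
  qed auto
  then show ?thesis by (rule not_Cinf_if_deriv_not_locally_Ck[OF elu_DERIV])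
qed

lemma softsign_DERIV: "(softsign has_real_derivative 1 / (1 + \<bar>x\<bar>)\<^sup>2) (at x)"
proof -
  have "((\<lambda>x. if 0 \<le> x then x / (1 + x) else x / (1 - x)) has_real_derivative
      (if 0 \<le> x then 1 / (1 + x)\<^sup>2 else 1 / (1 - x)\<^sup>2)) (at x)"
  proof (rule DERIV_if_nonneg)
    show "((\<lambda>x. x / (1 + x)) has_real_derivative 1 / (1 + x)\<^sup>2) (at x)" if "0 \<le> x" for x :: real
      using that by (auto intro!: derivative_eq_intros simp: field_simps power2_eq_square)
    show "((\<lambda>x. x / (1 - x)) has_real_derivative 1 / (1 - x)\<^sup>2) (at x)" if "x \<le> 0" for x :: real
      using that by (auto intro!: derivative_eq_intros simp: field_simps power2_eq_square)
  qed simp_all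
  moreover have "softsign = (\<lambda>x. if 0 \<le> x then x / (1 + x) else x / (1 - x))"
    by (simp add: softsign_def fun_eq_iff)
  moreover have "(if 0 \<le> x then 1 / (1 + x)\<^sup>2 else 1 / (1 - x)\<^sup>2) = 1 / (1 + \<bar>x\<bar>)\<^sup>2"
    by auto
  ultimately show ?thesis by simp
qed

lemma softsign_C1: "C1 softsign"
proof -
  have "(1 + \<bar>x\<bar>)\<^sup>2 \<noteq> 0" for x :: real by (smt (verit) zero_eq_power2)
  then show ?thesis
    unfolding C1_def using softsign_DERIV
    by (intro exI[of _ "\<lambda>x. 1 / (1 + \<bar>x\<bar>)\<^sup>2"]) (auto intro!: continuous_intros)
qed

lemma softsign_not_Cinf: "\<not> Cinf softsign"
proof -
  have "\<not> locally_Ck 1 (\<lambda>x. 1 / (1 + \<bar>x\<bar>)\<^sup>2) 0"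
  proof (rule not_locally_Ck_corner[of 1 "1 / 2"])
    fix u :: real assume "\<bar>u\<bar> < 1"
    then have v: "0 \<le> \<bar>u\<bar>" "\<bar>u\<bar> < 1" by auto
    have "(1 + \<bar>u\<bar>)\<^sup>2 \<le> 2\<^sup>2" using v by (intro power_mono) auto
    then have "\<bar>u\<bar> * (1 + \<bar>u\<bar>)\<^sup>2 \<le> \<bar>u\<bar> * 4" by (intro mult_left_mono) auto
    then have "1 / 2 * \<bar>u\<bar> * (1 + \<bar>u\<bar>)\<^sup>2 \<le> 2 * \<bar>u\<bar>" by simp
    also have "\<dots> \<le> (1 + \<bar>u\<bar>)\<^sup>2 - 1" by (simp add: power2_eq_square algebra_simps)
    finally show "1 / 2 * \<bar>u\<bar> \<le> 1 / (1 + \<bar>0\<bar>)\<^sup>2 - 1 / (1 + \<bar>u\<bar>)\<^sup>2"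
      by (simp add: field_simps)
  qed auto
  then show ?thesis by (rule not_Cinf_if_deriv_not_locally_Ck[OF softsign_DERIV])
qed

lemma isru_DERIV:
  assumes "0 \<le> a"
  shows "(isru a has_real_derivative 1 / sqrt (1 + a * x\<^sup>2) ^ 3) (at x)"
proof -
  define q where "q = sqrt (1 + a * x\<^sup>2)"
  have pos: "0 < 1 + a * x\<^sup>2" using assms by (simp add: add_pos_nonneg)
  then have q: "0 < q" "q\<^sup>2 = 1 + a * x\<^sup>2" by (simp_all add: q_def)
  have "(isru a has_real_derivative (q - x * (a * x / q)) / q\<^sup>2) (at x)"
    using pos q(1) unfolding q_def isru_def[abs_def]
    by (auto intro!: derivative_eq_intros simp: power2_eq_square field_simps)
  moreover have "(q - x * (a * x / q)) / q\<^sup>2 = 1 / q ^ 3"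
    using q by (simp add: field_simps power2_eq_square power3_eq_cube)
  ultimately show ?thesis by (simp add: q_def)
qed

lemma isrlu_DERIV:
  assumes "0 \<le> a"
  shows "(isrlu a has_real_derivative 1 / sqrt (1 + a * (min x 0)\<^sup>2) ^ 3) (at x)"
proof -
  have "((\<lambda>x. if 0 \<le> x then x else isru a x) has_real_derivative
      (if 0 \<le> x then 1 else 1 / sqrt (1 + a * x\<^sup>2) ^ 3)) (at x)"
    by (rule DERIV_if_nonneg[OF _ isru_DERIV[OF assms]]) (auto simp: isru_def)
  moreover have "isrlu a = (\<lambda>x. if 0 \<le> x then x else isru a x)"
    by (simp add: isrlu_def isru_def fun_eq_iff)
  moreover have "(if 0 \<le> x then 1 else 1 / sqrt (1 + a * x\<^sup>2) ^ 3) = 1 / sqrt (1 + a * (min x 0)\<^sup>2) ^ 3"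
    by (auto simp: min_def)
  ultimately show ?thesis by simp
qed

lemma isrlu_C1: "0 \<le> a \<Longrightarrow> C1 (isrlu a)"
proof -
  assume a: "0 \<le> a"
  have "sqrt (1 + a * (min x 0)\<^sup>2) ^ 3 \<noteq> 0" for x
    using a by (simp add: add_nonneg_eq_0_iff)
  then show ?thesis
    unfolding C1_def using isrlu_DERIV[OF a]
    by (intro exI[of _ "\<lambda>x. 1 / sqrt (1 + a * (min x 0)\<^sup>2) ^ 3"]) (auto intro!: continuous_intros)
qed

lemma isrlu_not_Cinf:
  assumes a: "0 < a"
  shows "\<not> Cinf (isrlu a)"
proof -
  have "\<not> locally_Ck 2 (\<lambda>x. 1 / sqrt (1 + a * (min x 0)\<^sup>2) ^ 3) 0"
  proof (rule not_locally_Ck_flat_right[of 2 "1 / sqrt a" "a / 2"])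
    fix u :: real assume u: "- (1 / sqrt a) < u" "u < 0"
    define w where "w = a * u\<^sup>2"
    have "sqrt a * \<bar>u\<bar> < 1" using u a by (simp add: field_simps)
    then have "(sqrt a * \<bar>u\<bar>)\<^sup>2 < 1\<^sup>2" using a by (intro power_strict_mono) auto
    then have w: "0 \<le> w" "w \<le> 1" using a by (simp_all add: w_def power_mult_distrib)
    have "1 / sqrt (1 + w) ^ 3 \<le> 1 / sqrt (1 + w) ^ 2"
      using w by (intro divide_left_mono power_increasing) auto
    also have "\<dots> = 1 - w / (1 + w)" using w by (simp add: field_simps)
    also have "\<dots> \<le> 1 - w / 2"
      using divide_left_mono[of "1 + w" 2 w] w by simp
    finally have "w / 2 \<le> 1 - 1 / sqrt (1 + w) ^ 3" by simp
    moreover have "1 / sqrt (1 + w) ^ 3 \<le> 1" using w by simp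
    ultimately show "a / 2 * \<bar>u\<bar> ^ 2 \<le> \<bar>1 / sqrt (1 + a * (min u 0)\<^sup>2) ^ 3 - 1 / sqrt (1 + a * (min 0 0)\<^sup>2) ^ 3\<bar>"
      using u by (simp add: w_def min_def)
  qed (use a in auto)
  then show ?thesis
    by (rule not_Cinf_if_deriv_not_locally_Ck[OF isrlu_DERIV[OF less_imp_le[OF a]]])
qed

lemma bounded_range_isru:
  assumes a: "0 < a"
  shows "bounded (range (isru a))"
proof -
  have "\<bar>isru a x\<bar> \<le> 1 / sqrt a" for x
  proof -
    have "sqrt a * \<bar>x\<bar> = sqrt (a * x\<^sup>2)" using a by (simp add: real_sqrt_mult)
    also have "\<dots> \<le> sqrt (1 + a * x\<^sup>2)" by simp
    finally show ?thesis
      using a by (simp add: isru_def abs_div field_simps add_pos_nonneg)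
  qed
  then show ?thesis unfolding bounded_iff by (intro exI[of _ "1 / sqrt a"]) auto
qed

lemma has_holomorphic_extension_isru:
  assumes a: "0 < a"
  shows "has_holomorphic_extension (isru a)"
proof (rule has_holomorphic_extension_strip[of "1 / sqrt a" "\<lambda>z. z / csqrt (1 + of_real a * z\<^sup>2)"])
  have re: "0 < Re (1 + of_real a * z\<^sup>2)" if "\<bar>Im z\<bar> < 1 / sqrt a" for z
  proof -
    have "\<bar>Im z\<bar> * sqrt a < 1" using that a by (simp add: less_divide_eq)
    then have "(\<bar>Im z\<bar> * sqrt a)\<^sup>2 < 1\<^sup>2" using a by (intro power_strict_mono) auto
    then have "a * (Im z)\<^sup>2 < 1" using a by (simp add: power_mult_distrib mult.commute)
    moreover have "0 \<le> a * (Re z)\<^sup>2" using a by simp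
    ultimately show ?thesis by (simp add: power2_eq_square algebra_simps)
  qed
  show "(\<lambda>z. z / csqrt (1 + of_real a * z\<^sup>2)) holomorphic_on {z. \<bar>Im z\<bar> < 1 / sqrt a}"
  proof (intro holomorphic_intros)
    fix z assume "z \<in> {z. \<bar>Im z\<bar> < 1 / sqrt a}"
    then have "0 < Re (1 + of_real a * z\<^sup>2)" using re by blast
    then show "1 + of_real a * z\<^sup>2 \<notin> \<real>\<^sub>\<le>\<^sub>0" "csqrt (1 + of_real a * z\<^sup>2) \<noteq> 0"
      by (auto simp: complex_nonpos_Reals_iff dest: arg_cong[of _ 0 Re])
  qed
  show "complex_of_real x / csqrt (1 + of_real a * (complex_of_real x)\<^sup>2) = of_real (isru a x)" for x
  proof -
    have "csqrt (1 + of_real a * (of_real x)\<^sup>2) = of_real (sqrt (1 + a * x\<^sup>2))"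
      using a by (simp add: add_nonneg_nonneg flip: of_real_power of_real_mult of_real_add)
    then show ?thesis by (simp add: isru_def)
  qed
qed (use a in simp)

lemma isru_nonconstant: "0 < a \<Longrightarrow> isru a 0 \<noteq> isru a 1"
  by (simp add: isru_def add_pos_pos)

lemma one_plus_exp_nonzero:
  assumes "\<bar>Im z\<bar> < 1"
  shows "1 + exp z \<noteq> 0"
proof -
  have "0 < cos (Im z)" using assms pi_gt3 by (intro cos_gt_zero_pi) auto
  then have "0 < Re (1 + exp z)" by (simp add: Re_exp add_pos_pos)
  then show ?thesis by (metis less_irrefl zero_complex.sel(1))
qed

lemma bounded_range_sigmoid: "bounded (range sigmoid)"
proof -
  have "\<bar>sigmoid x\<bar> \<le> 1" for x
    using add_pos_pos[OF zero_less_one exp_gt_zero[of "- x"]] by (simp add: sigmoid_def)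
  then show ?thesis unfolding bounded_iff by (intro exI[of _ 1]) auto
qed

lemma has_holomorphic_extension_sigmoid: "has_holomorphic_extension sigmoid"
proof (rule has_holomorphic_extension_strip[of 1 "\<lambda>z. 1 / (1 + exp (- z))"])
  show "(\<lambda>z. 1 / (1 + exp (- z))) holomorphic_on {z. \<bar>Im z\<bar> < 1}"
    by (intro holomorphic_intros) (simp add: one_plus_exp_nonzero)
  show "1 / (1 + exp (- complex_of_real x)) = complex_of_real (sigmoid x)" for x
    by (simp add: sigmoid_def flip: exp_of_real)
qed simp

lemma sigmoid_nonconstant: "sigmoid 0 \<noteq> sigmoid 1"
  by (simp add: sigmoid_def)

lemma bounded_range_tanh: "bounded (range (tanh :: real \<Rightarrow> real))"
  unfolding bounded_iff using tanh_real_bounds by (intro exI[of _ 1]) (auto simp: abs_less_iff less_imp_le)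

lemma has_holomorphic_extension_tanh: "has_holomorphic_extension tanh"
proof (rule has_holomorphic_extension_strip[of "1 / 2" "\<lambda>z. 2 / (1 + exp (- 2 * z)) - 1"])
  show "(\<lambda>z. 2 / (1 + exp (- 2 * z)) - 1) holomorphic_on {z. \<bar>Im z\<bar> < 1 / 2}"
    by (intro holomorphic_intros) (simp add: one_plus_exp_nonzero)
  show "2 / (1 + exp (- 2 * complex_of_real x)) - 1 = complex_of_real (tanh x)" for x
  proof -
    have "1 + exp (- 2 * x) \<noteq> 0" by (smt (verit) exp_gt_zero)
    then have "tanh x = 2 / (1 + exp (- 2 * x)) - 1"
      unfolding tanh_real_altdef by (simp add: field_simps)
    then show ?thesis by (simp flip: exp_of_real)
  qed
qed simp

lemma tanh_nonconstant: "tanh 0 \<noteq> (tanh 1 :: real)"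
  by simp

lemma bounded_range_arctan: "bounded (range arctan)"
proof -
  have "\<bar>arctan x\<bar> \<le> pi / 2" for x using arctan_bounded[of x] by arith
  then show ?thesis unfolding bounded_iff by (intro exI[of _ "pi / 2"]) auto
qed

lemma has_holomorphic_extension_arctan: "has_holomorphic_extension arctan"
  by (rule has_holomorphic_extension_strip[of 1 Arctan])
    (auto intro!: holomorphic_on_Arctan simp: Arctan_of_real)

lemma arctan_nonconstant: "arctan 0 \<noteq> arctan 1"
  by simp

lemma C1_not_Cinf_activations:
  assumes "\<rho> \<in> {relu_pow k | k. k \<ge> 2} \<union> {elu, softsign} \<union> {isrlu a | a. a > 0}"
  shows "C1 \<rho> \<and> \<not> Cinf \<rho>"
proof -
  consider (relu_pow) k where "2 \<le> k" "\<rho> = relu_pow k" | (elu) "\<rho> = elu" | (softsign) "\<rho> = softsign"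
    | (isrlu) a where "0 < a" "\<rho> = isrlu a"
    using assms by blast
  then show ?thesis
  proof cases
    case relu_pow
    then show ?thesis using relu_pow_C1 relu_pow_not_Cinf by simp
  next
    case elu
    then show ?thesis using elu_C1 elu_not_Cinf by simp
  next
    case softsign
    then show ?thesis using softsign_C1 softsign_not_Cinf by simp
  next
    case isrlu
    then show ?thesis using isrlu_C1 isrlu_not_Cinf by simp
  qed
qed

lemma bounded_holomorphic_activations:
  assumes "\<rho> \<in> {isru a | a. a > 0} \<union> {sigmoid, tanh, arctan}"
  shows "bounded (range \<rho>) \<and> has_holomorphic_extension \<rho> \<and> (\<exists>x y. \<rho> x \<noteq> \<rho> y)"
proof -
  consider (isru) a where "0 < a" "\<rho> = isru a" | (sigmoid) "\<rho> = sigmoid" | (tanh) "\<rho> = tanh"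
    | (arctan) "\<rho> = arctan"
    using assms by blast
  then show ?thesis
  proof cases
    case isru
    then show ?thesis using bounded_range_isru has_holomorphic_extension_isru isru_nonconstant by blast
  next
    case sigmoid
    then show ?thesis
      using bounded_range_sigmoid has_holomorphic_extension_sigmoid sigmoid_nonconstant by blast
  next
    case tanh
    then show ?thesis using bounded_range_tanh has_holomorphic_extension_tanh tanh_nonconstant by blast
  next
    case arctan
    then show ?thesis
      using bounded_range_arctan has_holomorphic_extension_arctan arctan_nonconstant by blast
  qed
qed

theorem corollary3p4:
  shows "(\<forall>k\<ge>2. C1 (relu_pow k) \<and> \<not> Cinf (relu_pow k))
       \<and> (C1 elu \<and> \<not> Cinf elu)
       \<and> (C1 softsign \<and> \<not> Cinf softsign)
       \<and> (\<forall>a>0. C1 (isrlu a) \<and> \<not> Cinf (isrlu a))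
       \<and> (\<forall>a>0. bounded (range (isru a)) \<and> real_analytic (isru a) \<and> (\<exists>x y. isru a x \<noteq> isru a y))
       \<and> (bounded (range sigmoid) \<and> real_analytic sigmoid \<and> (\<exists>x y. sigmoid x \<noteq> sigmoid y))
       \<and> (bounded (range (tanh :: real \<Rightarrow> real)) \<and> real_analytic tanh \<and> (\<exists>x y::real. tanh x \<noteq> tanh y))
       \<and> (bounded (range arctan) \<and> real_analytic arctan \<and> (\<exists>x y. arctan x \<noteq> arctan y))
       \<and> (C1 softplus \<and> approx_homogeneous 1 0 softplus)
       \<and> (\<forall>\<rho>. \<rho> \<in> {relu_pow k | k. k \<ge> 2} \<union> {elu, softsign} \<union> {isrlu a | a. a > 0}
                  \<union> {isru a | a. a > 0} \<union> {sigmoid, tanh, arctan} \<longrightarrow>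
            (\<forall>B>0. \<forall>S. scalar_arch S \<and> S ! (length S - 2) \<ge> 2 \<longrightarrow>
               RNN_not_closed \<rho> S (cube (S ! 0) B)))
       \<and> (\<forall>B>0. \<forall>S. scalar_arch S \<longrightarrow> RNN_not_closed softplus S (cube (S ! 0) B))"
proof -
  have analytic: "bounded (range \<rho>) \<and> real_analytic \<rho> \<and> (\<exists>x y. \<rho> x \<noteq> \<rho> y)"
    if "\<rho> \<in> {isru a | a. a > 0} \<union> {sigmoid, tanh, arctan}" for \<rho>
    using bounded_holomorphic_activations[OF that] real_analytic_if_holomorphic_extension by blast
  have "\<forall>k\<ge>2. C1 (relu_pow k) \<and> \<not> Cinf (relu_pow k)"
    using relu_pow_C1 relu_pow_not_Cinf by simp
  moreover have "C1 elu \<and> \<not> Cinf elu" using elu_C1 elu_not_Cinf ..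
  moreover have "C1 softsign \<and> \<not> Cinf softsign" using softsign_C1 softsign_not_Cinf ..
  moreover have "\<forall>a>0. C1 (isrlu a) \<and> \<not> Cinf (isrlu a)" using isrlu_C1 isrlu_not_Cinf by simp
  moreover have "\<forall>a>0. bounded (range (isru a)) \<and> real_analytic (isru a) \<and> (\<exists>x y. isru a x \<noteq> isru a y)"
    using analytic by blast
  moreover have "bounded (range sigmoid) \<and> real_analytic sigmoid \<and> (\<exists>x y. sigmoid x \<noteq> sigmoid y)"
    using analytic by blast
  moreover have "bounded (range (tanh :: real \<Rightarrow> real)) \<and> real_analytic tanh \<and> (\<exists>x y::real. tanh x \<noteq> tanh y)"
    using analytic by blast
  moreover have "bounded (range arctan) \<and> real_analytic arctan \<and> (\<exists>x y. arctan x \<noteq> arctan y)"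
    using analytic by blast
  moreover have "C1 softplus \<and> approx_homogeneous 1 0 softplus"
    using softplus_C1 softplus_approx_homogeneous ..
  moreover have "\<forall>\<rho>. \<rho> \<in> {relu_pow k | k. k \<ge> 2} \<union> {elu, softsign} \<union> {isrlu a | a. a > 0}
      \<union> {isru a | a. a > 0} \<union> {sigmoid, tanh, arctan} \<longrightarrow>
      (\<forall>B>0. \<forall>S. scalar_arch S \<and> S ! (length S - 2) \<ge> 2 \<longrightarrow> RNN_not_closed \<rho> S (cube (S ! 0) B))"
    (is "\<forall>\<rho>. \<rho> \<in> ?activations \<longrightarrow> _")
  proof (intro allI impI, elim conjE)
    fix \<rho> and B :: real and S assume \<rho>: "\<rho> \<in> ?activations" and B: "B > 0" and S: "scalar_arch S" "S ! (length S - 2) \<ge> 2"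
    show "RNN_not_closed \<rho> S (cube (S ! 0) B)"
      using \<rho> C1_not_Cinf_activations[of \<rho>] bounded_holomorphic_activations[of \<rho>]
        C1_not_Cinf_RNN_not_closed[OF _ _ S B] bounded_holomorphic_RNN_not_closed[OF _ _ _ S(1) B]
      unfolding Un_iff by blast
  qed
  moreover have "\<forall>B>0. \<forall>S. scalar_arch S \<longrightarrow> RNN_not_closed softplus S (cube (S ! 0) B)"
    using softplus_RNN_not_closed by blast
  ultimately show ?thesis by blast
qed

end
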